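(* There is a constant $c>0$ such that for every integer $n\ge 1$, with $N=2^n$, the $2N\times 2N$ unitary matrix $C_N^{\mathrm{II}}\oplus (-i)\,S_N^{\mathrm{II}}$ can be realized exactly by a quantum circuit on $n+1$ qubits (plus at most a constant number of ancilla qubits that start and end in $|0\rangle$) consisting of at most $c\,n^2$ elementary gates. In short, $C_N^{\mathrm{II}}$ and $S_N^{\mathrm{II}}$ (and hence their transposes $C_N^{\mathrm{III}}$, $S_N^{\mathrm{III}}$) can be realized with $O(\log^2 N)$ elementary quantum gates.
   Context: Qubit/basis conventions: the state space of $m$ qubits is $\mathbb{C}^{2^m}$ with computational basis $|x\rangle$, $x$ a bit string $b_m\dots b_1$ identified with the integer $\sum_k b_k2^{k-1}$; the most significant bit corresponds to the leftmost tensor factor. Elementary gates: (i) a CNOT between any two qubits, and (ii) any single-qubit gate $I_{2^{m-t}}\otimes U\otimes I_{2^{t-1}}$ with $U\in\mathcal U(2)$ arbitrary. A circuit realizes a unitary $W$ if the product of its gates equals $W$ (ancillas, if any, mapped $|0\rangle\mapsto|0\rangle$). $A\oplus B$ is the block-diagonal matrix with blocks $A,B$. Type II transforms: $C_N^{\mathrm{II}}=\sqrt{2/N}\,[k_j\cos(j(l+\tfrac12)\pi/N)]_{j,l=0,\dots,N-1}$ with $k_0=1/\sqrt2$, $k_j=1$ for $j\ge1$; $S_N^{\mathrm{II}}=\sqrt{2/N}\,[k'_j\sin(j(l+\tfrac12)\pi/N)]_{j=1,\dots,N;\ l=0,\dots,N-1}$ with $k'_N=1/\sqrt2$, $k'_j=1$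 for $j<N$. $C_N^{\mathrm{III}}$, $S_N^{\mathrm{III}}$ are the transposes of $C_N^{\mathrm{II}}$, $S_N^{\mathrm{II}}$. $i=\sqrt{-1}$. *)

theory Defs
  imports Complex_Main "Jordan_Normal_Form.Matrix" "Jordan_Normal_Form.Conjugate"
begin

text \<open>Qubit k (1 <= k <= m) of a basis index x corresponds to bit b_k, of weight 2^(k-1);
  qubit m is the most significant (leftmost tensor factor).\<close>
definition qbit :: "nat \<Rightarrow> nat \<Rightarrow> bool" where
  "qbit x k = odd (x div 2 ^ (k - 1))"

definition qbitval :: "nat \<Rightarrow> nat \<Rightarrow> nat" where
  "qbitval x k = (x div 2 ^ (k - 1)) mod 2"

definition flip_qbit :: "nat \<Rightarrow> nat \<Rightarrow> nat" where
  "flip_qbit x k = (if qbit x k then x - 2 ^ (k - 1) else x + 2 ^ (k - 1))"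

definition cnot_gate :: "nat \<Rightarrow> nat \<Rightarrow> nat \<Rightarrow> complex mat" where
  "cnot_gate m a b = mat (2 ^ m) (2 ^ m)
     (\<lambda>(x, y). if x = (if qbit y a then flip_qbit y b else y) then 1 else 0)"

text \<open>The gate I_{2^(m-t)} \<otimes> U \<otimes> I_{2^(t-1)} on m qubits.\<close>
definition single_gate :: "nat \<Rightarrow> nat \<Rightarrow> complex mat \<Rightarrow> complex mat" where
  "single_gate m t U = mat (2 ^ m) (2 ^ m)
     (\<lambda>(x, y). if (\<forall>k\<in>{1..m} - {t}. qbit x k = qbit y k)
               then U $$ (qbitval x t, qbitval y t) else 0)"

definition adj :: "complex mat \<Rightarrow> complex mat" where
  "adj U = mat (dim_col U) (dim_row U) (\<lambda>(i, j). cnj (U $$ (j, i)))"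

definition unitary2 :: "complex mat \<Rightarrow> bool" where
  "unitary2 U \<longleftrightarrow> U \<in> carrier_mat 2 2 \<and> U * adj U = 1\<^sub>m 2"

definition elementary_gate :: "nat \<Rightarrow> complex mat \<Rightarrow> bool" where
  "elementary_gate m G \<longleftrightarrow>
     (\<exists>a b. a \<in> {1..m} \<and> b \<in> {1..m} \<and> a \<noteq> b \<and> G = cnot_gate m a b) \<or>
     (\<exists>t U. t \<in> {1..m} \<and> unitary2 U \<and> G = single_gate m t U)"

definition circuit_mat :: "nat \<Rightarrow> complex mat list \<Rightarrow> complex mat" where
  "circuit_mat m gs = foldr (*) gs (1\<^sub>m (2 ^ m))"

text \<open>A circuit gs on m + k qubits (the k ancillas being the k least significant qubits)
  realizes the 2^m x 2^m matrix W if it maps |x>|0^k> to (W|x>)|0^k> for all basis states x.\<close>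
definition realizes :: "nat \<Rightarrow> nat \<Rightarrow> complex mat list \<Rightarrow> complex mat \<Rightarrow> bool" where
  "realizes m k gs W \<longleftrightarrow>
     (\<forall>G\<in>set gs. elementary_gate (m + k) G) \<and>
     (\<forall>x < 2 ^ m. \<forall>y < 2 ^ (m + k).
        circuit_mat (m + k) gs $$ (y, x * 2 ^ k) =
          (if y mod 2 ^ k = 0 then W $$ (y div 2 ^ k, x) else 0))"

definition DCT2 :: "nat \<Rightarrow> complex mat" where
  "DCT2 N = mat N N (\<lambda>(j, l). complex_of_real
     (sqrt (2 / real N) * (if j = 0 then 1 / sqrt 2 else 1)
      * cos (real j * (real l + 1 / 2) * pi / real N)))"

text \<open>Row r corresponds to j = r + 1, j = 1..N.\<close>
definition DST2 :: "nat \<Rightarrow> complex mat" where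
  "DST2 N = mat N N (\<lambda>(r, l). complex_of_real
     (sqrt (2 / real N) * (if r + 1 = N then 1 / sqrt 2 else 1)
      * sin (real (r + 1) * (real l + 1 / 2) * pi / real N)))"

definition CS_block :: "nat \<Rightarrow> complex mat" where
  "CS_block N = four_block_mat (DCT2 N) (0\<^sub>m N N) (0\<^sub>m N N) ((- \<i>) \<cdot>\<^sub>m DST2 N)"

end

theory Submission
  imports Defs
begin

text \<open>Write N = 2^n. A Hadamard gate on the top qubit followed by CNOTs maps the basis vector
  of x to the even or odd symmetric extension (e_l \<plusminus> e_(2N-1-l)) / \<surd>2 of e_l, where l = x mod N
  and the sign is + for x < N. The Fourier transform of size 2N, followed by the phases
  exp(-\<pi> i j / 2N), turns it into the vector with entries cos(j (l + 1/2) \<pi> / N) / \<surd>N or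
  -i sin(j (l + 1/2) \<pi> / N) / \<surd>N. These are antisymmetric, respectively symmetric, under
  j \<mapsto> 2N - j, so a permutation, a butterfly of the entries j and 2N - j and a cyclic shift
  move column x of the cosine and sine matrices into place. The Fourier transform needs O(n^2)
  gates, and so do the modular additions on the low qubits, being diagonal phases conjugated by
  Fourier transforms.\<close>

section \<open>Circuits as operators on state vectors\<close>

text \<open>A state of m qubits is a function on basis indices, of which only the values below
  2^m matter. The last gate of a list acts first, matching circuit_mat gs = G1 * ... * Gk.\<close>

definition apply_gate :: "nat \<Rightarrow> complex mat \<Rightarrow> (nat \<Rightarrow> complex) \<Rightarrow> nat \<Rightarrow> complex" where
  "apply_gate m G v = (\<lambda>y. \<Sum>x<2^m. G $$ (y, x) * v x)"

definition apply_circuit :: "nat \<Rightarrow> complex mat list \<Rightarrow> (nat \<Rightarrow> complex) \<Rightarrow> nat \<Rightarrow> complex" where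
  "apply_circuit m gs v = foldr (apply_gate m) gs v"

lemma apply_circuit_Nil [simp]: "apply_circuit m [] v = v"
  by (simp add: apply_circuit_def)

lemma apply_circuit_Cons [simp]: "apply_circuit m (G # gs) v = apply_gate m G (apply_circuit m gs v)"
  by (simp add: apply_circuit_def)

lemma apply_circuit_append: "apply_circuit m (gs @ hs) v = apply_circuit m gs (apply_circuit m hs v)"
  by (simp add: apply_circuit_def)

definition ket :: "nat \<Rightarrow> nat \<Rightarrow> complex" where
  "ket x = (\<lambda>z. if z = x then 1 else 0)"

lemma circuit_mat_carrier:
  "\<forall>G\<in>set gs. G \<in> carrier_mat (2^m) (2^m) \<Longrightarrow> circuit_mat m gs \<in> carrier_mat (2^m) (2^m)"
  by (induction gs) (auto simp: circuit_mat_def)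

lemma circuit_mat_entry:
  assumes "\<forall>G\<in>set gs. G \<in> carrier_mat (2^m) (2^m)" "y < 2^m" "x < 2^m"
  shows "circuit_mat m gs $$ (y, x) = apply_circuit m gs (ket x) y"
  using assms
proof (induction gs arbitrary: y)
  case Nil
  then show ?case by (simp add: circuit_mat_def ket_def)
next
  case (Cons G gs)
  have "circuit_mat m gs \<in> carrier_mat (2^m) (2^m)" "G \<in> carrier_mat (2^m) (2^m)"
    using Cons.prems circuit_mat_carrier by auto
  then have "circuit_mat m (G # gs) $$ (y, x) = (\<Sum>z<2^m. G $$ (y, z) * circuit_mat m gs $$ (z, x))"
    using Cons.prems unfolding circuit_mat_def
    by (subst foldr.simps, subst o_apply, subst index_mult_mat) (auto simp: scalar_prod_def atLeast0LessThan)
  also have "\<dots> = (\<Sum>z<2^m. G $$ (y, z) * apply_circuit m gs (ket x) z)"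
    using Cons by (intro sum.cong) auto
  finally show ?case by (simp add: apply_gate_def)
qed

definition elementary_circuit :: "nat \<Rightarrow> complex mat list \<Rightarrow> bool" where
  "elementary_circuit m gs \<longleftrightarrow> (\<forall>G\<in>set gs. elementary_gate m G)"

lemma elementary_circuit_Nil [simp]: "elementary_circuit m []"
  and elementary_circuit_Cons [simp]:
    "elementary_circuit m (G # gs) \<longleftrightarrow> elementary_gate m G \<and> elementary_circuit m gs"
  and elementary_circuit_append [simp]:
    "elementary_circuit m (gs @ hs) \<longleftrightarrow> elementary_circuit m gs \<and> elementary_circuit m hs"
  by (auto simp: elementary_circuit_def)

lemma elementary_gate_carrier: "elementary_gate m G \<Longrightarrow> G \<in> carrier_mat (2^m) (2^m)"
  unfolding elementary_gate_def single_gate_def cnot_gate_def by auto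

lemma qbit_eq_bit: "qbit x k = bit x (k - 1)"
  by (simp add: qbit_def bit_nat_def)

lemma qbitval_eq: "qbitval x k = (if qbit x k then 1 else 0)"
  by (simp add: qbitval_def qbit_def odd_iff_mod_2_eq_one)

lemma qbit_iff_qbitval: "qbit x k \<longleftrightarrow> qbitval x k = 1"
  by (simp add: qbitval_eq)

lemma less_if_bit_of_less_power: "(x::nat) < 2^m \<Longrightarrow> bit x n \<Longrightarrow> n < m"
  by (metis bit_take_bit_iff take_bit_nat_eq_self_iff)

lemma nat_eq_if_low_bits_eq:
  assumes "(x::nat) < 2^m" "y < 2^m" "\<And>n. n < m \<Longrightarrow> bit x n = bit y n"
  shows "x = y"
  using assms less_if_bit_of_less_power by (metis bit_eqI)

lemma set_bit_less_power: "(y::nat) < 2^m \<Longrightarrow> n < m \<Longrightarrow> set_bit n y < 2^m"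
  by (metis nless_le not_less_iff_gr_or_eq take_bit_nat_eq_self_iff take_bit_set_bit_eq)

lemma unset_bit_less_power: "(y::nat) < 2^m \<Longrightarrow> unset_bit n y < 2^m"
  by (metis le_less_trans of_nat_less_numeral_power_cancel_iff of_nat_unset_bit_eq unset_bit_less_eq)

lemma flip_bit_less_power: "(y::nat) < 2^m \<Longrightarrow> n < m \<Longrightarrow> flip_bit n y < 2^m"
  by (simp add: flip_bit_eq_if set_bit_less_power unset_bit_less_power)

lemma set_bit_eq_unset_bit_plus: "set_bit n (y::nat) = unset_bit n y + 2^n"
proof -
  have "set_bit n (unset_bit n y) = unset_bit n y + 2^n"
    by (simp add: set_bit_eq bit_unset_bit_iff)
  moreover have "set_bit n (unset_bit n y) = set_bit n y"
    by (rule bit_eqI) (auto simp: bit_set_bit_iff bit_unset_bit_iff)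
  ultimately show ?thesis by simp
qed

lemma unset_bit_eq_minus: "unset_bit n (y::nat) = y - qbitval y (Suc n) * 2^n"
proof (cases "bit y n")
  case True
  then have "set_bit n y = y"
    by (intro bit_eqI) (auto simp: bit_set_bit_iff)
  then show ?thesis
    using set_bit_eq_unset_bit_plus[of n y] True by (simp add: qbitval_eq qbit_eq_bit)
next
  case False
  then have "unset_bit n y = y"
    by (intro bit_eqI) (auto simp: bit_unset_bit_iff)
  then show ?thesis
    using False by (simp add: qbitval_eq qbit_eq_bit)
qed

lemma flip_bit_eq_plus_minus: "flip_bit n (y::nat) = (if qbit y (Suc n) then y - 2^n else y + 2^n)"
  by (auto simp: flip_bit_eq_if set_bit_eq_unset_bit_plus unset_bit_eq_minus qbitval_eq qbit_eq_bit)

lemma mod_power_Suc_eq: "(y::nat) mod 2^Suc j = qbitval y (Suc j) * 2^j + y mod 2^j"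
  by (metis mod_mult2_eq power_Suc2 qbitval_def diff_Suc_1 mult.commute)

lemma qbitval_decomposed:
  assumes "b < 2" "(c::nat) < 2^j"
  shows "qbitval (A * 2^Suc j + b * 2^j + c) (Suc j) = b"
proof -
  have "A * 2^Suc j + b * 2^j + c = (2 * A + b) * 2^j + c" by (simp add: algebra_simps)
  then show ?thesis using assms by (simp add: qbitval_def)
qed

lemma decompose_at_bit: "(y::nat) = y div 2^Suc j * 2^Suc j + qbitval y (Suc j) * 2^j + y mod 2^j"
  using mod_power_Suc_eq[of y j] by (metis add.assoc div_mult_mod_eq)

lemma high_part_plus_less_power:
  assumes "(z::nat) < 2^m" "k \<le> m" "a < 2^k"
  shows "z div 2^k * 2^k + a < 2^m"
proof -
  have m: "(2::nat)^m = 2^(m - k) * 2^k" using assms(2) by (simp flip: power_add)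
  have "z div 2^k < 2^(m - k)" using assms(1) m by (simp add: less_mult_imp_div_less)
  then have "(z div 2^k + 1) * 2^k \<le> 2^(m - k) * 2^k" by (intro mult_right_mono) simp_all
  then show ?thesis using assms(3) m by (simp add: algebra_simps)
qed

lemma qbits_agree_except_iff:
  assumes "(x::nat) < 2^m" "y < 2^m" "t \<in> {1..m}"
  shows "(\<forall>k\<in>{1..m} - {t}. qbit y k = qbit x k) \<longleftrightarrow> x = unset_bit (t - 1) y \<or> x = set_bit (t - 1) y"
proof
  assume agree: "\<forall>k\<in>{1..m} - {t}. qbit y k = qbit x k"
  have same: "bit x n = bit y n" if "n < m" "n \<noteq> t - 1" for n
    using agree[rule_format, of "Suc n"] that assms(3) by (auto simp: qbit_eq_bit)
  show "x = unset_bit (t - 1) y \<or> x = set_bit (t - 1) y"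
  proof (cases "bit x (t - 1)")
    case True
    have "x = set_bit (t - 1) y"
      using assms(3) True same
      by (intro nat_eq_if_low_bits_eq[OF assms(1) set_bit_less_power[OF assms(2)]])
        (auto simp: bit_set_bit_iff)
    then show ?thesis ..
  next
    case False
    have "x = unset_bit (t - 1) y"
      using assms(3) False same
      by (intro nat_eq_if_low_bits_eq[OF assms(1) unset_bit_less_power[OF assms(2)]])
        (auto simp: bit_unset_bit_iff)
    then show ?thesis ..
  qed
next
  assume "x = unset_bit (t - 1) y \<or> x = set_bit (t - 1) y"
  then show "\<forall>k\<in>{1..m} - {t}. qbit y k = qbit x k"
    using assms(3) by (auto simp: qbit_eq_bit bit_unset_bit_iff bit_set_bit_iff)
qed

lemma apply_single_gate:
  assumes "t \<in> {1..m}" "y < 2^m"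
  shows "apply_gate m (single_gate m t U) v y =
    U $$ (qbitval y t, 0) * v (unset_bit (t - 1) y) + U $$ (qbitval y t, 1) * v (set_bit (t - 1) y)"
proof -
  let ?u = "unset_bit (t - 1) y" and ?s = "set_bit (t - 1) y"
  have less: "?u < 2^m" "?s < 2^m"
    using assms unset_bit_less_power set_bit_less_power by auto
  have vals: "qbitval ?u t = 0" "qbitval ?s t = 1"
    by (auto simp: qbitval_eq qbit_eq_bit bit_unset_bit_iff bit_set_bit_iff)
  have "apply_gate m (single_gate m t U) v y =
      (\<Sum>x<2^m. if x \<in> {?u, ?s} then U $$ (qbitval y t, qbitval x t) * v x else 0)"
    unfolding apply_gate_def single_gate_def
    by (intro sum.cong refl) (use assms qbits_agree_except_iff in auto)
  also have "\<dots> = (\<Sum>x\<in>{?u, ?s}. U $$ (qbitval y t, qbitval x t) * v x)"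
    by (subst sum.inter_filter[symmetric]) (use less in \<open>auto intro!: sum.cong\<close>)
  also have "\<dots> = U $$ (qbitval y t, 0) * v ?u + U $$ (qbitval y t, 1) * v ?s"
    using vals by (subst sum.insert) auto
  finally show ?thesis .
qed

definition cnot_index :: "nat \<Rightarrow> nat \<Rightarrow> nat \<Rightarrow> nat" where
  "cnot_index a b x = (if qbit x a then flip_bit (b - 1) x else x)"

lemma qbit_cnot_index:
  assumes "a \<ge> 1" "b \<ge> 1" "c \<ge> 1" "a \<noteq> b"
  shows "qbit (cnot_index a b y) c \<longleftrightarrow> qbit y c \<noteq> (c = b \<and> qbit y a)"
proof -
  have "c - 1 = b - 1 \<longleftrightarrow> c = b" using assms by arith
  then show ?thesis by (auto simp: cnot_index_def qbit_eq_bit bit_flip_bit_iff)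
qed

lemma cnot_index_involution:
  assumes "a \<ge> 1" "b \<ge> 1" "a \<noteq> b"
  shows "cnot_index a b (cnot_index a b x) = x"
proof -
  have "qbit (cnot_index a b x) a = qbit x a"
    using qbit_cnot_index[OF assms(1,2,1,3)] assms(3) by simp
  then show ?thesis
    by (auto simp: cnot_index_def bit_flip_bit_iff intro!: bit_eqI)
qed

lemma cnot_index_less: "x < 2^m \<Longrightarrow> b \<in> {1..m} \<Longrightarrow> cnot_index a b x < 2^m"
  by (auto simp: cnot_index_def intro!: flip_bit_less_power)

lemma apply_cnot_gate:
  assumes "a \<in> {1..m}" "b \<in> {1..m}" "a \<noteq> b" "y < 2^m"
  shows "apply_gate m (cnot_gate m a b) v y = v (cnot_index a b y)"
proof -
  have "(if qbit x a then flip_qbit x b else x) = cnot_index a b x" for x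
    using assms(2) by (auto simp: cnot_index_def flip_qbit_def flip_bit_eq_plus_minus qbit_eq_bit)
  moreover have "y = cnot_index a b x \<longleftrightarrow> x = cnot_index a b y" for x
    using cnot_index_involution[of a b] assms by auto
  ultimately have "apply_gate m (cnot_gate m a b) v y = (\<Sum>x<2^m. if x = cnot_index a b y then v x else 0)"
    unfolding apply_gate_def cnot_gate_def using assms(4) by (intro sum.cong refl) auto
  then show ?thesis
    using cnot_index_less[OF assms(4) assms(2)] by simp
qed

lemma elementary_single_gate: "t \<in> {1..m} \<Longrightarrow> unitary2 U \<Longrightarrow> elementary_gate m (single_gate m t U)"
  and elementary_cnot_gate: "a \<in> {1..m} \<Longrightarrow> b \<in> {1..m} \<Longrightarrow> a \<noteq> b \<Longrightarrow> elementary_gate m (cnot_gate m a b)"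
  unfolding elementary_gate_def by blast+

definition mat2 :: "complex \<Rightarrow> complex \<Rightarrow> complex \<Rightarrow> complex \<Rightarrow> complex mat" where
  "mat2 a b c d = mat 2 2 (\<lambda>(i, j). if i = 0 then (if j = 0 then a else b) else (if j = 0 then c else d))"

lemma mat2_index [simp]:
  "mat2 a b c d $$ (0, 0) = a" "mat2 a b c d $$ (0, 1) = b"
  "mat2 a b c d $$ (1, 0) = c" "mat2 a b c d $$ (1, 1) = d"
  "mat2 a b c d $$ (0, Suc 0) = b" "mat2 a b c d $$ (Suc 0, 0) = c" "mat2 a b c d $$ (Suc 0, Suc 0) = d"
  by (auto simp: mat2_def)

lemma unitary2_mat2:
  assumes "a * cnj a + b * cnj b = 1" "c * cnj c + d * cnj d = 1" "a * cnj c + b * cnj d = 0"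
  shows "unitary2 (mat2 a b c d)"
proof -
  have carrier: "mat2 a b c d \<in> carrier_mat 2 2" by (simp add: mat2_def)
  have "mat2 a b c d * adj (mat2 a b c d) = 1\<^sub>m 2"
  proof (rule eq_matI)
    fix i j assume "i < dim_row (1\<^sub>m 2 :: complex mat)" "j < dim_col (1\<^sub>m 2 :: complex mat)"
    then have ij: "i < 2" "j < 2" by auto
    then have "(mat2 a b c d * adj (mat2 a b c d)) $$ (i, j) =
       mat2 a b c d $$ (i, 0) * cnj (mat2 a b c d $$ (j, 0)) +
       mat2 a b c d $$ (i, 1) * cnj (mat2 a b c d $$ (j, 1))"
      using carrier
      by (simp add: adj_def scalar_prod_def mat2_def numeral_2_eq_2 lessThan_Suc atLeast0LessThan)
    moreover have "cnj a * c + cnj b * d = 0"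
      using arg_cong[OF assms(3), of cnj] by (simp add: mult.commute)
    moreover have "i \<in> {0, 1}" "j \<in> {0, 1}" using ij by auto
    ultimately show "(mat2 a b c d * adj (mat2 a b c d)) $$ (i, j) = 1\<^sub>m 2 $$ (i, j)"
      using assms by (auto simp: mult.commute)
  qed (auto simp: adj_def mat2_def)
  then show ?thesis using carrier by (simp add: unitary2_def)
qed

lemma apply_single_gate_mat2:
  assumes "t \<in> {1..m}" "y < 2^m"
  shows "apply_gate m (single_gate m t (mat2 a b c d)) v y =
    (if qbit y t then c * v (unset_bit (t - 1) y) + d * v (set_bit (t - 1) y)
     else a * v (unset_bit (t - 1) y) + b * v (set_bit (t - 1) y))"
  using apply_single_gate[OF assms] by (simp add: qbitval_eq)

definition inv_sqrt2 :: complex where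
  "inv_sqrt2 = complex_of_real (1 / sqrt 2)"

definition pauli_X :: "complex mat" where
  "pauli_X = mat2 0 1 1 0"

definition hadamard :: "complex mat" where
  "hadamard = mat2 inv_sqrt2 inv_sqrt2 inv_sqrt2 (- inv_sqrt2)"

definition phase_shift :: "real \<Rightarrow> complex mat" where
  "phase_shift \<theta> = mat2 1 0 0 (cis \<theta>)"

definition rotation :: "real \<Rightarrow> complex mat" where
  "rotation \<theta> = mat2 (of_real (cos \<theta>)) (- of_real (sin \<theta>)) (of_real (sin \<theta>)) (of_real (cos \<theta>))"

lemma unitary2_pauli_X: "unitary2 pauli_X"
  unfolding pauli_X_def by (rule unitary2_mat2) auto

lemma unitary2_hadamard: "unitary2 hadamard"
proof -
  have "inv_sqrt2 * inv_sqrt2 = 1 / 2"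
    by (simp add: inv_sqrt2_def flip: of_real_mult)
  then show ?thesis
    unfolding hadamard_def by (intro unitary2_mat2) (auto simp: inv_sqrt2_def)
qed

lemma unitary2_phase_shift: "unitary2 (phase_shift \<theta>)"
  unfolding phase_shift_def by (rule unitary2_mat2) (auto simp: cis_cnj cis_mult)

lemma unitary2_rotation: "unitary2 (rotation \<theta>)"
proof -
  have "(complex_of_real (cos \<theta>))\<^sup>2 + (complex_of_real (sin \<theta>))\<^sup>2 = 1"
    by (simp flip: of_real_power of_real_add)
  then show ?thesis
    unfolding rotation_def by (intro unitary2_mat2) (auto simp: algebra_simps power2_eq_square)
qed

lemma apply_pauli_X:
  "t \<in> {1..m} \<Longrightarrow> y < 2^m \<Longrightarrow> apply_gate m (single_gate m t pauli_X) v y = v (flip_bit (t - 1) y)"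
  using apply_single_gate_mat2 by (simp add: pauli_X_def flip_bit_eq_if qbit_eq_bit)

lemma apply_phase_shift:
  "t \<in> {1..m} \<Longrightarrow> y < 2^m \<Longrightarrow>
    apply_gate m (single_gate m t (phase_shift \<theta>)) v y = (if qbit y t then cis \<theta> else 1) * v y"
  using apply_single_gate_mat2
  by (simp add: phase_shift_def qbit_eq_bit set_bit_eq unset_bit_eq_minus qbitval_eq)

lemma apply_hadamard:
  "t \<in> {1..m} \<Longrightarrow> y < 2^m \<Longrightarrow> apply_gate m (single_gate m t hadamard) v y =
    inv_sqrt2 * (v (unset_bit (t - 1) y) + (if qbit y t then -1 else 1) * v (set_bit (t - 1) y))"
  using apply_single_gate_mat2 by (simp add: hadamard_def algebra_simps)

lemma apply_rotation:
  "t \<in> {1..m} \<Longrightarrow> y < 2^m \<Longrightarrow> apply_gate m (single_gate m t (rotation \<theta>)) v y =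
    (if qbit y t then of_real (sin \<theta>) * v (unset_bit (t - 1) y) + of_real (cos \<theta>) * v (set_bit (t - 1) y)
     else of_real (cos \<theta>) * v (unset_bit (t - 1) y) - of_real (sin \<theta>) * v (set_bit (t - 1) y))"
  using apply_single_gate_mat2 by (simp add: rotation_def)

lemma cis_mod_power_Suc:
  "cis (\<alpha> * real (y mod 2^Suc k)) =
    (if qbit y (Suc k) then cis (\<alpha> * 2^k) else 1) * cis (\<alpha> * real (y mod 2^k))"
  using mod_power_Suc_eq[of y k] by (auto simp: qbitval_eq distrib_left cis_mult)

definition cphase :: "nat \<Rightarrow> nat \<Rightarrow> nat \<Rightarrow> real \<Rightarrow> complex mat list" where
  "cphase m a b \<theta> =
    [single_gate m a (phase_shift (\<theta> / 2)), single_gate m b (phase_shift (\<theta> / 2)), cnot_gate m a b,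
     single_gate m b (phase_shift (- \<theta> / 2)), cnot_gate m a b]"

lemma apply_cphase:
  assumes "a \<in> {1..m}" "b \<in> {1..m}" "a \<noteq> b" "y < 2^m"
  shows "apply_circuit m (cphase m a b \<theta>) v y = (if qbit y a \<and> qbit y b then cis \<theta> else 1) * v y"
proof -
  have less: "cnot_index a b y < 2^m" using cnot_index_less assms by auto
  have "apply_circuit m (cphase m a b \<theta>) v y =
    (if qbit y a then cis (\<theta> / 2) else 1) * ((if qbit y b then cis (\<theta> / 2) else 1) *
     ((if qbit (cnot_index a b y) b then cis (- \<theta> / 2) else 1) * v (cnot_index a b (cnot_index a b y))))"
    using assms less by (simp add: cphase_def apply_phase_shift apply_cnot_gate)
  also have "\<dots> = (if qbit y a \<and> qbit y b then cis \<theta> else 1) * v y"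
    using assms cnot_index_involution[of a b y] qbit_cnot_index[of a b b y] by (auto simp: cis_mult)
  finally show ?thesis .
qed

lemma elementary_cphase:
  "a \<in> {1..m} \<Longrightarrow> b \<in> {1..m} \<Longrightarrow> a \<noteq> b \<Longrightarrow> elementary_circuit m (cphase m a b \<theta>)"
  by (simp add: cphase_def elementary_single_gate elementary_cnot_gate unitary2_phase_shift)

lemma length_cphase [simp]: "length (cphase m a b \<theta>) = 5"
  by (simp add: cphase_def)

fun phase_layer :: "nat \<Rightarrow> real \<Rightarrow> nat \<Rightarrow> complex mat list" where
  "phase_layer m \<alpha> 0 = []"
| "phase_layer m \<alpha> (Suc k) = single_gate m (Suc k) (phase_shift (\<alpha> * 2^k)) # phase_layer m \<alpha> k"

lemma apply_phase_layer:
  "k \<le> m \<Longrightarrow> y < 2^m \<Longrightarrow> apply_circuit m (phase_layer m \<alpha> k) v y = cis (\<alpha> * real (y mod 2^k)) * v y"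
proof (induction k)
  case (Suc k)
  then show ?case using cis_mod_power_Suc[of \<alpha> y k] by (simp add: apply_phase_shift)
qed simp

lemma elementary_phase_layer: "k \<le> m \<Longrightarrow> elementary_circuit m (phase_layer m \<alpha> k)"
  by (induction k) (simp_all add: elementary_single_gate unitary2_phase_shift)

lemma length_phase_layer [simp]: "length (phase_layer m \<alpha> k) = k"
  by (induction k) auto

fun cphase_layer :: "nat \<Rightarrow> nat \<Rightarrow> real \<Rightarrow> nat \<Rightarrow> complex mat list" where
  "cphase_layer m c \<alpha> 0 = []"
| "cphase_layer m c \<alpha> (Suc k) = cphase m c (Suc k) (\<alpha> * 2^k) @ cphase_layer m c \<alpha> k"

lemma apply_cphase_layer:
  assumes "k < c" "c \<le> m" "y < 2^m"
  shows "apply_circuit m (cphase_layer m c \<alpha> k) v y =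
    (if qbit y c then cis (\<alpha> * real (y mod 2^k)) else 1) * v y"
  using assms(1)
proof (induction k)
  case (Suc k)
  then show ?case
    using assms cis_mod_power_Suc[of \<alpha> y k] by (auto simp: apply_circuit_append apply_cphase)
qed simp

lemma elementary_cphase_layer: "k < c \<Longrightarrow> c \<le> m \<Longrightarrow> elementary_circuit m (cphase_layer m c \<alpha> k)"
  by (induction k) (simp_all add: elementary_cphase)

lemma length_cphase_layer [simp]: "length (cphase_layer m c \<alpha> k) = 5 * k"
  by (induction k) auto

definition swap_gates :: "nat \<Rightarrow> nat \<Rightarrow> complex mat list" where
  "swap_gates m j = [cnot_gate m j (Suc j), cnot_gate m (Suc j) j, cnot_gate m j (Suc j)]"

definition swap_index :: "nat \<Rightarrow> nat \<Rightarrow> nat" where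
  "swap_index j y = cnot_index j (Suc j) (cnot_index (Suc j) j (cnot_index j (Suc j) y))"

lemma swap_index_decomposed:
  assumes "p < 2" "q < 2" "e < 2^i"
  shows "swap_index (Suc i) (A * 2^(i + 2) + p * 2^Suc i + q * 2^i + e) =
    A * 2^(i + 2) + q * 2^Suc i + p * 2^i + e"
proof -
  define y where "y p q = A * 2^(i + 2) + p * 2^Suc i + q * 2^i + e" for p q :: nat
  have bits: "qbit (y p q) (Suc i) \<longleftrightarrow> q = 1" "qbit (y p q) (Suc (Suc i)) \<longleftrightarrow> p = 1"
    if "p < 2" "q < 2" for p q
  proof -
    have "q * 2^i + e < 2^Suc i"
      using that assms(3) by (cases "q = 0") (auto simp: less_2_cases_iff)
    moreover have "y p q = (2 * A + p) * 2^Suc i + q * 2^i + e"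
      and "y p q = A * 2^Suc (Suc i) + p * 2^Suc i + (q * 2^i + e)"
      by (simp_all add: y_def algebra_simps)
    ultimately have "qbitval (y p q) (Suc i) = q" "qbitval (y p q) (Suc (Suc i)) = p"
      using qbitval_decomposed that assms(3) by metis+
    then show "qbit (y p q) (Suc i) \<longleftrightarrow> q = 1" "qbit (y p q) (Suc (Suc i)) \<longleftrightarrow> p = 1"
      by (auto simp: qbitval_eq split: if_splits)
  qed
  have flips: "flip_bit i (y p q) = y p (1 - q)" "flip_bit (Suc i) (y p q) = y (1 - p) q"
    if "p < 2" "q < 2" for p q
    using that bits[OF that] by (auto simp: flip_bit_eq_plus_minus less_2_cases_iff y_def)
  have "swap_index (Suc i) (y p q) = y q p"
    using assms(1,2) bits flips by (auto simp: swap_index_def cnot_index_def less_2_cases_iff)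
  then show ?thesis by (simp add: y_def)
qed

lemma apply_swap_gates:
  assumes "j \<ge> 1" "Suc j \<le> m" "y < 2^m"
  shows "apply_circuit m (swap_gates m j) v y = v (swap_index j y)"
    and "swap_index j y < 2^m"
proof -
  have j: "j \<in> {1..m}" "Suc j \<in> {1..m}" using assms by auto
  note less = cnot_index_less[OF assms(3) j(2)] cnot_index_less[OF cnot_index_less[OF assms(3) j(2)] j(1)]
  show "apply_circuit m (swap_gates m j) v y = v (swap_index j y)"
    using j less assms(3) by (simp add: swap_gates_def apply_cnot_gate swap_index_def)
  show "swap_index j y < 2^m"
    using less j by (simp add: swap_index_def cnot_index_less)
qed

lemma elementary_swap_gates: "j \<ge> 1 \<Longrightarrow> Suc j \<le> m \<Longrightarrow> elementary_circuit m (swap_gates m j)"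
  by (simp add: swap_gates_def elementary_cnot_gate)

fun rotate_gates :: "nat \<Rightarrow> nat \<Rightarrow> complex mat list" where
  "rotate_gates m 0 = []"
| "rotate_gates m (Suc k) = swap_gates m (Suc k) @ rotate_gates m k"

lemma apply_rotate_gates:
  assumes "Suc k \<le> m" "c < 2" "a < 2^k" "H * 2^Suc k + c * 2^k + a < 2^m"
  shows "apply_circuit m (rotate_gates m k) v (H * 2^Suc k + c * 2^k + a) = v (H * 2^Suc k + 2 * a + c)"
  using assms
proof (induction k arbitrary: H c a)
  case 0
  then show ?case by simp
next
  case (Suc k)
  define d where "d = a div 2^k"
  define e where "e = a mod 2^k"
  define y where "y = H * 2^Suc (Suc k) + c * 2^Suc k + a"
  have d: "d < 2" using Suc.prems(3) by (simp add: d_def less_mult_imp_div_less power_Suc2)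
  have e: "e < 2^k" by (simp add: e_def)
  have a: "a = d * 2^k + e" using div_mult_mod_eq[of a "2^k"] by (simp add: d_def e_def)
  have "y = H * 2^(k + 2) + c * 2^Suc k + d * 2^k + e"
    by (simp add: y_def a)
  then have swapped: "swap_index (Suc k) y = (2 * H + d) * 2^Suc k + c * 2^k + e"
    using swap_index_decomposed[OF Suc.prems(2) d e] by (simp add: algebra_simps)
  have y_less: "y < 2^m" using Suc.prems(4) by (simp add: y_def)
  have "apply_circuit m (rotate_gates m (Suc k)) v y =
      apply_circuit m (rotate_gates m k) v (swap_index (Suc k) y)"
    using apply_swap_gates[of "Suc k" m y] Suc.prems(1) y_less by (simp add: apply_circuit_append)
  also have "\<dots> = v ((2 * H + d) * 2^Suc k + 2 * e + c)"
    unfolding swapped using Suc.IH[of c e "2 * H + d"] Suc.prems(1,2) e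
      apply_swap_gates(2)[of "Suc k" m y] y_less swapped by simp
  also have "(2 * H + d) * 2^Suc k + 2 * e + c = H * 2^Suc (Suc k) + 2 * a + c"
    by (simp add: a algebra_simps)
  finally show ?case by (simp add: y_def)
qed

lemma elementary_rotate_gates: "Suc k \<le> m \<Longrightarrow> elementary_circuit m (rotate_gates m k)"
  by (induction k) (simp_all add: elementary_swap_gates)

lemma length_rotate_gates [simp]: "length (rotate_gates m k) = 3 * k"
  by (induction k) (auto simp: swap_gates_def)

section \<open>The quantum Fourier transform\<close>

definition fourier_coeff :: "real \<Rightarrow> nat \<Rightarrow> nat \<Rightarrow> nat \<Rightarrow> complex" where
  "fourier_coeff \<sigma> k z x = cis (\<sigma> * 2 * pi * real z * real x / 2^k) / complex_of_real (sqrt (2^k))"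

definition fourier_low :: "real \<Rightarrow> nat \<Rightarrow> (nat \<Rightarrow> complex) \<Rightarrow> nat \<Rightarrow> complex" where
  "fourier_low \<sigma> k v y = (\<Sum>x<2^k. fourier_coeff \<sigma> k (y mod 2^k) x * v (y div 2^k * 2^k + x))"

text \<open>Radix-2 decimation: the rotation sorts the indices into even and odd ones, the recursive
  transform treats both halves, the controlled phases supply the twiddle factors and the
  Hadamard gate is the final butterfly.\<close>

fun qft_gates :: "nat \<Rightarrow> real \<Rightarrow> nat \<Rightarrow> complex mat list" where
  "qft_gates m \<sigma> 0 = []"
| "qft_gates m \<sigma> (Suc k) = single_gate m (Suc k) hadamard #
     cphase_layer m (Suc k) (\<sigma> * 2 * pi / 2^Suc k) k @ qft_gates m \<sigma> k @ rotate_gates m k"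

lemma length_qft_gates: "length (qft_gates m \<sigma> k) \<le> 4 * k^2"
  by (induction k) (simp_all add: power2_eq_square algebra_simps)

lemma elementary_qft_gates: "k \<le> m \<Longrightarrow> elementary_circuit m (qft_gates m \<sigma> k)"
  by (induction k)
    (simp_all add: elementary_single_gate unitary2_hadamard elementary_cphase_layer elementary_rotate_gates)

lemma cis_sign_multiple_2pi: "\<sigma> \<in> {-1, 1} \<Longrightarrow> cis (2 * pi * (\<sigma> * real t * real a)) = 1"
  by (intro cis_multiple_2pi) auto

lemma fourier_coeff_even:
  assumes "\<sigma> \<in> {-1, 1}"
  shows "fourier_coeff \<sigma> (Suc k) (t * 2^k + s) (2 * a) = inv_sqrt2 * fourier_coeff \<sigma> k s a"
proof -
  have "\<sigma> * 2 * pi * real (t * 2^k + s) * real (2 * a) / 2^Suc k =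
        2 * pi * (\<sigma> * real t * real a) + \<sigma> * 2 * pi * real s * real a / 2^k"
    by (simp add: field_simps)
  then have "cis (\<sigma> * 2 * pi * real (t * 2^k + s) * real (2 * a) / 2^Suc k) =
      cis (\<sigma> * 2 * pi * real s * real a / 2^k)"
    using cis_sign_multiple_2pi[OF assms, of t a] by (simp add: cis_mult[symmetric])
  then show ?thesis
    by (simp add: fourier_coeff_def inv_sqrt2_def real_sqrt_mult)
qed

lemma fourier_coeff_odd:
  assumes "\<sigma> \<in> {-1, 1}" "t < 2"
  shows "fourier_coeff \<sigma> (Suc k) (t * 2^k + s) (2 * a + 1) =
    inv_sqrt2 * (if t = 1 then -1 else 1) * cis (\<sigma> * 2 * pi / 2^Suc k * real s) * fourier_coeff \<sigma> k s a"
proof -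
  have "\<sigma> * 2 * pi * real (t * 2^k + s) * real (2 * a + 1) / 2^Suc k =
        2 * pi * (\<sigma> * real t * real a) + \<sigma> * pi * real t + \<sigma> * 2 * pi / 2^Suc k * real s
        + \<sigma> * 2 * pi * real s * real a / 2^k"
    by (simp add: field_simps)
  moreover have "cis (\<sigma> * pi * real t) = (if t = 1 then -1 else 1)"
    using assms by (auto simp: less_2_cases_iff complex_eq_iff)
  ultimately have "cis (\<sigma> * 2 * pi * real (t * 2^k + s) * real (2 * a + 1) / 2^Suc k) =
      (if t = 1 then -1 else 1) * cis (\<sigma> * 2 * pi / 2^Suc k * real s) *
      cis (\<sigma> * 2 * pi * real s * real a / 2^k)"
    using cis_sign_multiple_2pi[OF assms(1), of t a] by (simp add: cis_mult[symmetric])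
  then show ?thesis
    by (simp add: fourier_coeff_def inv_sqrt2_def real_sqrt_mult)
qed

lemma sum_lessThan_double: "(\<Sum>x<2 * (K::nat). f x) = (\<Sum>a<K. f (2 * a) + f (2 * a + 1))"
  by (induction K) (simp_all add: sum.distrib ac_simps)

lemma fourier_sum_radix2:
  assumes "\<sigma> \<in> {-1, 1}" "t < 2"
  shows "(\<Sum>x<2^Suc k. fourier_coeff \<sigma> (Suc k) (t * 2^k + s) x * v x) =
    inv_sqrt2 * ((\<Sum>a<2^k. fourier_coeff \<sigma> k s a * v (2 * a)) + (if t = 1 then -1 else 1) *
      cis (\<sigma> * 2 * pi / 2^Suc k * real s) * (\<Sum>a<2^k. fourier_coeff \<sigma> k s a * v (2 * a + 1)))"
proof -
  have "(\<Sum>x<2^Suc k. fourier_coeff \<sigma> (Suc k) (t * 2^k + s) x * v x) =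
      (\<Sum>a<2^k. fourier_coeff \<sigma> (Suc k) (t * 2^k + s) (2 * a) * v (2 * a) +
        fourier_coeff \<sigma> (Suc k) (t * 2^k + s) (2 * a + 1) * v (2 * a + 1))"
    using sum_lessThan_double[of "\<lambda>x. fourier_coeff \<sigma> (Suc k) (t * 2^k + s) x * v x" "2^k"] by simp
  also have "\<dots> = inv_sqrt2 * ((\<Sum>a<2^k. fourier_coeff \<sigma> k s a * v (2 * a)) + (if t = 1 then -1 else 1) *
      cis (\<sigma> * 2 * pi / 2^Suc k * real s) * (\<Sum>a<2^k. fourier_coeff \<sigma> k s a * v (2 * a + 1)))"
    using fourier_coeff_even[OF assms(1)] fourier_coeff_odd[OF assms]
    by (simp add: sum.distrib sum_distrib_left algebra_simps)
  finally show ?thesis .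
qed

lemma apply_qft_step:
  assumes Q: "\<And>v y. y < 2^m \<Longrightarrow> apply_circuit m Q v y = fourier_low \<sigma> k v y"
    and "Suc k \<le> m" "t < 2" "s < 2^k" "H * 2^Suc k + t * 2^k + s < 2^m"
  shows "apply_circuit m (cphase_layer m (Suc k) \<alpha> k @ Q @ rotate_gates m k) v (H * 2^Suc k + t * 2^k + s) =
    (if t = 1 then cis (\<alpha> * real s) else 1) * (\<Sum>a<2^k. fourier_coeff \<sigma> k s a * v (H * 2^Suc k + 2 * a + t))"
proof -
  define z where "z = H * 2^Suc k + t * 2^k + s"
  have z_less: "z < 2^m" using assms(5) by (simp add: z_def)
  have z: "z = (2 * H + t) * 2^k + s" by (simp add: z_def algebra_simps)
  then have low: "z mod 2^k = s" "z div 2^k = 2 * H + t"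
    using assms(4) by simp_all
  have "qbitval z (Suc k) = t"
    unfolding z_def using assms(3,4) by (rule qbitval_decomposed)
  then have top: "qbit z (Suc k) \<longleftrightarrow> t = 1" by (simp add: qbit_iff_qbitval)
  have rot: "apply_circuit m (rotate_gates m k) v ((2 * H + t) * 2^k + a) = v (H * 2^Suc k + 2 * a + t)"
    if "a < 2^k" for a
  proof -
    have "(2 * H + t) * 2^k + a = H * 2^Suc k + t * 2^k + a" by (simp add: algebra_simps)
    moreover have "(2 * H + t) * 2^k + a < 2^m"
      using high_part_plus_less_power[OF z_less _ that] assms(2) by (simp add: low)
    ultimately show ?thesis using apply_rotate_gates[OF assms(2,3) that] by simp
  qed
  have "apply_circuit m (cphase_layer m (Suc k) \<alpha> k @ Q @ rotate_gates m k) v z =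
      (if qbit z (Suc k) then cis (\<alpha> * real (z mod 2^k)) else 1) *
      fourier_low \<sigma> k (apply_circuit m (rotate_gates m k) v) z"
    using assms(2) z_less by (simp add: apply_circuit_append apply_cphase_layer Q)
  also have "fourier_low \<sigma> k (apply_circuit m (rotate_gates m k) v) z =
      (\<Sum>a<2^k. fourier_coeff \<sigma> k s a * v (H * 2^Suc k + 2 * a + t))"
    unfolding fourier_low_def low by (intro sum.cong refl) (simp add: rot)
  finally show ?thesis unfolding z_def[symmetric] using top low by simp
qed

lemma apply_qft_gates:
  assumes "\<sigma> \<in> {-1, 1}" "k \<le> m" "y < 2^m"
  shows "apply_circuit m (qft_gates m \<sigma> k) v y = fourier_low \<sigma> k v y"
  using assms(2,3)
proof (induction k arbitrary: y v)
  case 0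
  then show ?case by (simp add: fourier_low_def fourier_coeff_def)
next
  case (Suc k)
  let ?K = "(2::nat)^k" and ?\<alpha> = "\<sigma> * 2 * pi / 2^Suc k"
  define B where "B = y div 2^Suc k * 2^Suc k"
  define t where "t = qbitval y (Suc k)"
  define s where "s = y mod ?K"
  define W where "W = apply_circuit m (cphase_layer m (Suc k) ?\<alpha> k @ qft_gates m \<sigma> k @ rotate_gates m k) v"
  have t: "t < 2" by (simp add: t_def qbitval_def)
  have s: "s < ?K" by (simp add: s_def)
  have y: "y = B + t * ?K + s" unfolding B_def t_def s_def by (rule decompose_at_bit)
  have y_mod: "y mod 2^Suc k = t * ?K + s"
    using mod_power_Suc_eq[of y k] by (simp add: t_def s_def)
  have unset: "unset_bit k y = B + 0 * ?K + s" and set: "set_bit k y = B + 1 * ?K + s"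
    using y by (simp_all add: unset_bit_eq_minus set_bit_eq_unset_bit_plus t_def)
  have IH: "apply_circuit m (qft_gates m \<sigma> k) u z = fourier_low \<sigma> k u z" if "z < 2^m" for u z
    using Suc that by simp
  have W: "W (B + t' * ?K + s) =
      (if t' = 1 then cis (?\<alpha> * real s) else 1) * (\<Sum>a<?K. fourier_coeff \<sigma> k s a * v (B + 2 * a + t'))"
    if "t' < 2" for t'
  proof -
    have "B + t' * ?K + s < 2^m"
      using high_part_plus_less_power[of y m "Suc k" "t' * ?K + s"] Suc.prems s that
      by (cases "t' = 0") (auto simp: B_def less_2_cases_iff add.assoc)
    then show ?thesis
      unfolding W_def B_def
      using apply_qft_step[OF IH _ _ s, where H = "y div 2^Suc k" and \<alpha> = ?\<alpha> and v = v] Suc.prems that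
      by simp
  qed
  have "apply_circuit m (qft_gates m \<sigma> (Suc k)) v y =
      inv_sqrt2 * (W (B + 0 * ?K + s) + (if t = 1 then -1 else 1) * W (B + 1 * ?K + s))"
    using apply_hadamard[of "Suc k" m y W] Suc.prems unset set by (simp add: W_def t_def qbitval_eq)
  also have "\<dots> = (\<Sum>x<2^Suc k. fourier_coeff \<sigma> (Suc k) (t * ?K + s) x * v (B + x))"
    using fourier_sum_radix2[OF assms(1) t, of k s "\<lambda>x. v (B + x)"] W[of 0] W[of 1]
    by (simp add: algebra_simps)
  finally show ?case
    unfolding fourier_low_def y_mod B_def[symmetric] by simp
qed

section \<open>Modular arithmetic on the low qubits\<close>

lemma sum_roots_of_unity:
  fixes d :: int and K :: nat
  assumes "K > 0"
  shows "(\<Sum>j<K. cis (2 * pi * real j * of_int d / real K)) = (if int K dvd d then of_nat K else 0)"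
proof -
  define w where "w = cis (2 * pi * of_int d / real K)"
  have powers: "cis (2 * pi * real j * of_int d / real K) = w ^ j" for j
    unfolding w_def DeMoivre by (simp add: field_simps)
  show ?thesis
  proof (cases "int K dvd d")
    case True
    then obtain q where "d = int K * q" by blast
    then have "w = cis (2 * pi * of_int q)"
      unfolding w_def using assms by (simp add: field_simps)
    then have "w = 1" by simp
    then show ?thesis using True powers by simp
  next
    case False
    have "w ^ K = cis (2 * pi * of_int d)"
      unfolding w_def DeMoivre using assms by (simp add: field_simps)
    then have "w ^ K = 1" by simp
    moreover have "w \<noteq> 1"
    proof
      assume "w = 1"
      then have "cos (2 * pi * of_int d / real K) = 1" by (simp add: w_def complex_eq_iff)
      then obtain n :: int where "2 * pi * of_int d / real K = of_int n * 2 * pi"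
        by (auto simp: cos_one_2pi_int)
      then have "real_of_int d = of_int (n * int K)" using assms by (simp add: field_simps)
      then show False using False by (metis dvd_triv_right of_int_eq_iff)
    qed
    ultimately have "(\<Sum>j<K. w ^ j) = 0" by (simp add: sum_gp_strict)
    then show ?thesis using False powers by simp
  qed
qed

lemma fourier_coeff_product:
  "fourier_coeff (-1) k z j * cis (- 2 * pi * real c * real j / 2^k) * fourier_coeff 1 k j x =
   cis (2 * pi * real j * of_int (int x - int z - int c) / real ((2::nat)^k)) / 2^k"
proof -
  have "fourier_coeff (-1) k z j * cis (- 2 * pi * real c * real j / 2^k) * fourier_coeff 1 k j x =
    cis (-1 * 2 * pi * real z * real j / 2^k) * cis (- 2 * pi * real c * real j / 2^k) *
    cis (1 * 2 * pi * real j * real x / 2^k)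
    / (complex_of_real (sqrt (2^k)) * complex_of_real (sqrt (2^k)))"
    unfolding fourier_coeff_def by simp
  also have "\<dots> = cis (-1 * 2 * pi * real z * real j / 2^k + - 2 * pi * real c * real j / 2^k +
      1 * 2 * pi * real j * real x / 2^k) / 2^k"
    by (simp add: cis_mult flip: of_real_mult)
  also have "-1 * 2 * pi * real z * real j / 2^k + - 2 * pi * real c * real j / 2^k +
      1 * 2 * pi * real j * real x / 2^k
     = 2 * pi * real j * of_int (int x - int z - int c) / real ((2::nat)^k)"
    by (simp add: field_simps)
  finally show ?thesis .
qed

lemma fourier_shift_delta:
  assumes "x < 2^k"
  shows "(\<Sum>j<2^k. fourier_coeff (-1) k z j * cis (- 2 * pi * real c * real j / 2^k) * fourier_coeff 1 k j x) =
    (if x = (z + c) mod 2^k then 1 else 0)"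
proof -
  let ?K = "(2::nat)^k"
  have "(\<Sum>j<?K. fourier_coeff (-1) k z j * cis (- 2 * pi * real c * real j / 2^k) * fourier_coeff 1 k j x) =
      (\<Sum>j<?K. cis (2 * pi * real j * of_int (int x - int z - int c) / real ?K)) / 2^k"
    unfolding sum_divide_distrib by (intro sum.cong refl) (rule fourier_coeff_product)
  also have "\<dots> = (if int ?K dvd (int x - int z - int c) then 1 else 0)"
    by (subst sum_roots_of_unity) simp_all
  also have "int ?K dvd (int x - int z - int c) \<longleftrightarrow> x = (z + c) mod ?K"
  proof -
    have "int ?K dvd (int x - int z - int c) \<longleftrightarrow> int x mod int ?K = (int z + int c) mod int ?K"
      by (simp add: mod_eq_dvd_iff diff_diff_eq)
    also have "\<dots> \<longleftrightarrow> x mod ?K = (z + c) mod ?K"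
      by (metis of_nat_add of_nat_eq_iff zmod_int)
    finally show ?thesis using assms by simp
  qed
  finally show ?thesis .
qed

text \<open>The shift theorem: conjugating a diagonal phase by the Fourier transform gives a cyclic
  shift of the low qubits, here by an amount depending on the high qubits.\<close>

lemma apply_fourier_conjugate:
  assumes "k \<le> m" "y < 2^m"
    and D: "\<And>w u. w < 2^m \<Longrightarrow>
      apply_circuit m D u w = cis (- 2 * pi * real (sh (w div 2^k)) * real (w mod 2^k) / 2^k) * u w"
  shows "apply_circuit m (qft_gates m (-1) k @ D @ qft_gates m 1 k) v y =
    v (y div 2^k * 2^k + (y mod 2^k + sh (y div 2^k)) mod 2^k)"
proof -
  let ?K = "(2::nat)^k"
  define hi where "hi = y div ?K"
  define z where "z = y mod ?K"
  define c where "c = sh hi"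
  define a where "a j = fourier_coeff (-1) k z j * cis (- 2 * pi * real c * real j / 2^k)" for j
  have less: "hi * ?K + j < 2^m" if "j < ?K" for j
    using high_part_plus_less_power[OF assms(2,1) that] by (simp add: hi_def)
  have delta: "(\<Sum>j<?K. a j * fourier_coeff 1 k j x) = (if x = (z + c) mod ?K then 1 else 0)" if "x < ?K" for x
    unfolding a_def using fourier_shift_delta[OF that] by simp
  have "apply_circuit m (qft_gates m (-1) k @ D @ qft_gates m 1 k) v y =
      (\<Sum>j<?K. fourier_coeff (-1) k z j *
        apply_circuit m D (apply_circuit m (qft_gates m 1 k) v) (hi * ?K + j))"
    using apply_qft_gates[of "-1" k m y] assms(1,2)
    by (simp add: apply_circuit_append fourier_low_def hi_def z_def)
  also have "\<dots> = (\<Sum>j<?K. a j * (\<Sum>x<?K. fourier_coeff 1 k j x * v (hi * ?K + x)))"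
    unfolding a_def using less apply_qft_gates[of 1 k m] assms(1)
    by (intro sum.cong refl) (simp add: D c_def mult.assoc fourier_low_def)
  also have "\<dots> = (\<Sum>j<?K. \<Sum>x<?K. a j * fourier_coeff 1 k j x * v (hi * ?K + x))"
    by (simp add: sum_distrib_left mult.assoc)
  also have "\<dots> = (\<Sum>x<?K. \<Sum>j<?K. a j * fourier_coeff 1 k j x * v (hi * ?K + x))"
    by (rule sum.swap)
  also have "\<dots> = (\<Sum>x<?K. (\<Sum>j<?K. a j * fourier_coeff 1 k j x) * v (hi * ?K + x))"
    by (simp add: sum_distrib_right)
  also have "\<dots> = (\<Sum>x<?K. if x = (z + c) mod ?K then v (hi * ?K + x) else 0)"
    using delta by (intro sum.cong refl) simp
  also have "\<dots> = v (hi * ?K + (z + c) mod ?K)"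
    by simp
  finally show ?thesis by (simp add: hi_def z_def c_def)
qed

definition add_low :: "nat \<Rightarrow> nat \<Rightarrow> nat \<Rightarrow> nat" where
  "add_low k s y = y div 2^k * 2^k + (y mod 2^k + s) mod 2^k"

definition shift_gates :: "nat \<Rightarrow> nat \<Rightarrow> nat \<Rightarrow> complex mat list" where
  "shift_gates m k s = qft_gates m (-1) k @ phase_layer m (- 2 * pi * real s / 2^k) k @ qft_gates m 1 k"

definition cshift_gates :: "nat \<Rightarrow> nat \<Rightarrow> nat \<Rightarrow> nat \<Rightarrow> complex mat list" where
  "cshift_gates m c k s = qft_gates m (-1) k @ cphase_layer m c (- 2 * pi * real s / 2^k) k @ qft_gates m 1 k"

lemma apply_shift_gates:
  "k \<le> m \<Longrightarrow> y < 2^m \<Longrightarrow> apply_circuit m (shift_gates m k s) v y = v (add_low k s y)"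
  unfolding shift_gates_def add_low_def
  by (rule apply_fourier_conjugate[where sh = "\<lambda>_. s", simplified])
    (simp_all add: apply_phase_layer field_simps)

lemma qbit_above_low: "k < c \<Longrightarrow> qbit w c \<longleftrightarrow> odd (w div 2^k div 2^(c - 1 - k))"
proof -
  assume "k < c"
  then have "(2::nat)^(c - 1) = 2^k * 2^(c - 1 - k)" by (simp flip: power_add)
  then show ?thesis by (simp add: qbit_def div_mult2_eq)
qed

lemma apply_cshift_gates:
  assumes "k < c" "c \<le> m" "y < 2^m"
  shows "apply_circuit m (cshift_gates m c k s) v y = v (if qbit y c then add_low k s y else y)"
proof -
  let ?sh = "\<lambda>h. if odd (h div 2^(c - 1 - k)) then s else 0"
  have "apply_circuit m (cshift_gates m c k s) v y =
      v (y div 2^k * 2^k + (y mod 2^k + ?sh (y div 2^k)) mod 2^k)"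
    unfolding cshift_gates_def
  proof (rule apply_fourier_conjugate)
    fix w u assume "w < (2::nat)^m"
    then show "apply_circuit m (cphase_layer m c (- 2 * pi * real s / 2^k) k) u w =
      cis (- 2 * pi * real (?sh (w div 2^k)) * real (w mod 2^k) / 2^k) * u w"
      using apply_cphase_layer[OF assms(1,2)] qbit_above_low[OF assms(1), of w] by (simp add: field_simps)
  qed (use assms in auto)
  then show ?thesis
    using qbit_above_low[OF assms(1), of y] by (cases "qbit y c") (simp_all add: add_low_def div_mult_mod_eq)
qed

lemma length_shift_gates: "length (shift_gates m k s) \<le> 9 * k^2"
  using length_qft_gates[of m "-1" k] length_qft_gates[of m 1 k]
  by (simp add: shift_gates_def power2_eq_square) (use le_square[of k] in linarith)

lemma length_cshift_gates: "length (cshift_gates m c k s) \<le> 13 * k^2"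
  using length_qft_gates[of m "-1" k] length_qft_gates[of m 1 k]
  by (simp add: cshift_gates_def power2_eq_square) (use le_square[of k] in linarith)

lemma elementary_shift_gates: "k \<le> m \<Longrightarrow> elementary_circuit m (shift_gates m k s)"
  by (simp add: shift_gates_def elementary_qft_gates elementary_phase_layer)

lemma elementary_cshift_gates: "k < c \<Longrightarrow> c \<le> m \<Longrightarrow> elementary_circuit m (cshift_gates m c k s)"
  by (simp add: cshift_gates_def elementary_qft_gates elementary_cphase_layer)

definition compl_low :: "nat \<Rightarrow> nat \<Rightarrow> nat" where
  "compl_low k y = y div 2^k * 2^k + (2^k - 1 - y mod 2^k)"

lemma compl_low_flip_bit: "compl_low k (flip_bit k y) = compl_low (Suc k) y"
proof -
  define H where "H = y div 2^Suc k"
  define t where "t = qbitval y (Suc k)"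
  define s where "s = y mod 2^k"
  have t: "t < 2" by (simp add: t_def qbitval_def)
  have s: "s < 2^k" by (simp add: s_def)
  have y: "y = H * 2^Suc k + t * 2^k + s" unfolding H_def t_def s_def by (rule decompose_at_bit)
  have "qbit y (Suc k) \<longleftrightarrow> t = 1" by (simp add: t_def qbit_iff_qbitval)
  then have "flip_bit k y = (if t = 1 then y - 2^k else y + 2^k)"
    by (simp add: flip_bit_eq_plus_minus)
  then have "flip_bit k y = (2 * H + 1 - t) * 2^k + s"
    using t by (auto simp: y less_2_cases_iff algebra_simps)
  then have "compl_low k (flip_bit k y) = (2 * H + 1 - t) * 2^k + (2^k - 1 - s)"
    using s by (simp add: compl_low_def)
  moreover have "compl_low (Suc k) y = H * 2^Suc k + (2^Suc k - 1 - (t * 2^k + s))"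
    using mod_power_Suc_eq[of y k] by (simp add: compl_low_def H_def t_def s_def)
  ultimately show ?thesis
    using t s by (auto simp: less_2_cases_iff algebra_simps)
qed

fun not_layer :: "nat \<Rightarrow> nat \<Rightarrow> complex mat list" where
  "not_layer m 0 = []"
| "not_layer m (Suc k) = single_gate m (Suc k) pauli_X # not_layer m k"

lemma apply_not_layer: "k \<le> m \<Longrightarrow> y < 2^m \<Longrightarrow> apply_circuit m (not_layer m k) v y = v (compl_low k y)"
proof (induction k arbitrary: y)
  case 0
  then show ?case by (simp add: compl_low_def)
next
  case (Suc k)
  then show ?case
    using flip_bit_less_power[of y m k] by (simp add: apply_pauli_X compl_low_flip_bit)
qed

fun cnot_layer :: "nat \<Rightarrow> nat \<Rightarrow> nat \<Rightarrow> complex mat list" where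
  "cnot_layer m c 0 = []"
| "cnot_layer m c (Suc k) = cnot_gate m c (Suc k) # cnot_layer m c k"

lemma apply_cnot_layer:
  "k < c \<Longrightarrow> c \<le> m \<Longrightarrow> y < 2^m \<Longrightarrow>
    apply_circuit m (cnot_layer m c k) v y = v (if qbit y c then compl_low k y else y)"
proof (induction k arbitrary: y)
  case 0
  then show ?case by (simp add: compl_low_def)
next
  case (Suc k)
  have gates: "c \<in> {1..m}" "Suc k \<in> {1..m}" "c \<noteq> Suc k" using Suc.prems by auto
  have "cnot_index c (Suc k) y < 2^m" using cnot_index_less[OF Suc.prems(3) gates(2)] .
  moreover have "qbit (cnot_index c (Suc k) y) c = qbit y c"
    using qbit_cnot_index[of c "Suc k" c y] gates by auto
  ultimately show ?case
    using Suc gates by (auto simp: apply_cnot_gate cnot_index_def compl_low_flip_bit)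
qed

lemma length_not_layer [simp]: "length (not_layer m k) = k"
  and length_cnot_layer [simp]: "length (cnot_layer m c k) = k"
  by (induction k) auto

lemma elementary_not_layer: "k \<le> m \<Longrightarrow> elementary_circuit m (not_layer m k)"
  by (induction k) (simp_all add: elementary_single_gate unitary2_pauli_X)

lemma elementary_cnot_layer: "k < c \<Longrightarrow> c \<le> m \<Longrightarrow> elementary_circuit m (cnot_layer m c k)"
  by (induction k) (simp_all add: elementary_cnot_gate)

definition neg_low :: "nat \<Rightarrow> nat \<Rightarrow> nat" where
  "neg_low k y = y div 2^k * 2^k + (2^k - y mod 2^k) mod 2^k"

lemma add_low_div: "add_low k s y div 2^k = y div 2^k"
  and add_low_mod: "add_low k s y mod 2^k = (y mod 2^k + s) mod 2^k"
  by (simp_all add: add_low_def)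

lemma compl_low_add_low: "compl_low k (add_low k (2^k - 1) y) = neg_low k y"
proof -
  let ?K = "(2::nat)^k" and ?r = "y mod 2^k"
  have r: "?r < ?K" by simp
  have "?K - 1 - (?r + (?K - 1)) mod ?K = (?K - ?r) mod ?K"
  proof (cases "?r = 0")
    case True
    then show ?thesis by simp
  next
    case False
    then have split: "?r + (?K - 1) = (?r - 1) + 1 * ?K" using r by linarith
    have "?r - 1 < ?K" using r by linarith
    then have "(?r + (?K - 1)) mod ?K = ?r - 1" unfolding split by (simp only: mod_mult_self1 mod_less)
    then show ?thesis using False r by simp
  qed
  then show ?thesis by (simp add: compl_low_def add_low_div add_low_mod neg_low_def)
qed

definition neg_gates :: "nat \<Rightarrow> nat \<Rightarrow> complex mat list" where
  "neg_gates m k = shift_gates m k (2^k - 1) @ not_layer m k"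

definition cneg_gates :: "nat \<Rightarrow> nat \<Rightarrow> nat \<Rightarrow> complex mat list" where
  "cneg_gates m c k = cshift_gates m c k (2^k - 1) @ cnot_layer m c k"

lemma add_low_less: "y < 2^m \<Longrightarrow> k \<le> m \<Longrightarrow> add_low k s y < 2^m"
  unfolding add_low_def by (rule high_part_plus_less_power) auto

lemma apply_neg_gates: "k \<le> m \<Longrightarrow> y < 2^m \<Longrightarrow> apply_circuit m (neg_gates m k) v y = v (neg_low k y)"
  unfolding neg_gates_def apply_circuit_append compl_low_add_low[symmetric]
  by (simp add: apply_shift_gates apply_not_layer add_low_less)

lemma apply_cneg_gates:
  assumes "k < c" "c \<le> m" "y < 2^m"
  shows "apply_circuit m (cneg_gates m c k) v y = v (if qbit y c then neg_low k y else y)"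
proof -
  have "qbit (add_low k s y) c = qbit y c" for s
    using qbit_above_low[OF assms(1)] by (simp add: add_low_div)
  then show ?thesis
    unfolding cneg_gates_def apply_circuit_append compl_low_add_low[symmetric]
    using assms add_low_less[of y m k] by (simp add: apply_cshift_gates apply_cnot_layer)
qed

lemma length_neg_gates: "length (neg_gates m k) \<le> 10 * k^2"
  and length_cneg_gates: "length (cneg_gates m c k) \<le> 14 * k^2"
  using length_shift_gates[of m k "2^k - 1"] length_cshift_gates[of m c k "2^k - 1"]
  by (simp_all add: neg_gates_def cneg_gates_def power2_eq_square) (use le_square[of k] in linarith)+

lemma elementary_neg_gates: "k \<le> m \<Longrightarrow> elementary_circuit m (neg_gates m k)"
  and elementary_cneg_gates: "k < c \<Longrightarrow> c \<le> m \<Longrightarrow> elementary_circuit m (cneg_gates m c k)"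
  by (simp_all add: neg_gates_def cneg_gates_def elementary_shift_gates elementary_not_layer
      elementary_cshift_gates elementary_cnot_layer)

section \<open>The circuit for the type II transforms\<close>

lemma upper_half_div_mod: "2^n \<le> y \<Longrightarrow> (y::nat) < 2 * 2^n \<Longrightarrow> y div 2^n = 1 \<and> y mod 2^n = y - 2^n"
  by (simp add: div_nat_eqI le_mod_geq)

lemma qbit_top: "y < 2 * 2^n \<Longrightarrow> qbit y (Suc n) \<longleftrightarrow> 2^n \<le> y"
  using upper_half_div_mod[of n y] by (cases "2^n \<le> y") (auto simp: qbit_def)

lemma unset_bit_top: "(y::nat) < 2 * 2^n \<Longrightarrow> unset_bit n y = (if 2^n \<le> y then y - 2^n else y)"
  using qbit_top[of y n] by (simp add: unset_bit_eq_minus qbitval_eq)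

lemma set_bit_top: "(y::nat) < 2 * 2^n \<Longrightarrow> set_bit n y = (if 2^n \<le> y then y else y + 2^n)"
  using qbit_top[of y n] by (simp add: set_bit_eq_unset_bit_plus unset_bit_top)

definition extension_gates :: "nat \<Rightarrow> complex mat list" where
  "extension_gates n = cnot_layer (Suc n) (Suc n) n @ [single_gate (Suc n) (Suc n) hadamard]"

lemma apply_extension_gates:
  assumes "y < 2 * 2^n"
  shows "apply_circuit (Suc n) (extension_gates n) v y =
    inv_sqrt2 * (if y < 2^n then v y + v (y + 2^n) else v (2 * 2^n - 1 - y) - v (3 * 2^n - 1 - y))"
proof (cases "y < 2^n")
  case True
  then show ?thesis
    using assms qbit_top[OF assms]
    by (simp add: extension_gates_def apply_circuit_append apply_cnot_layer apply_hadamard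
        unset_bit_top set_bit_top)
next
  case False
  define z where "z = 3 * 2^n - 1 - y"
  have z: "2^n \<le> z" "z < 2 * 2^n" using False assms by (auto simp: z_def)
  have "compl_low n y = z"
    using False assms upper_half_div_mod[of n y] by (simp add: compl_low_def z_def)
  then have "apply_circuit (Suc n) (extension_gates n) v y =
      apply_gate (Suc n) (single_gate (Suc n) (Suc n) hadamard) v z"
    using assms qbit_top[OF assms] False
    by (simp add: extension_gates_def apply_circuit_append apply_cnot_layer)
  also have "\<dots> = inv_sqrt2 * (v (z - 2^n) - v z)"
    using z qbit_top[OF z(2)] by (simp add: apply_hadamard unset_bit_top set_bit_top)
  finally show ?thesis
    using False by (simp add: z_def)
qed

lemma apply_extension_gates_ket:
  assumes "x < 2 * 2^n" "z < 2 * 2^n"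
  shows "apply_circuit (Suc n) (extension_gates n) (ket x) z =
    inv_sqrt2 * (ket (x mod 2^n) z + (if x < 2^n then 1 else -1) * ket (2 * 2^n - 1 - x mod 2^n) z)"
proof -
  let ?N = "(2::nat)^n"
  have "(if z < ?N then ket x z + ket x (z + ?N) else ket x (2 * ?N - 1 - z) - ket x (3 * ?N - 1 - z)) =
      ket (x mod ?N) z + (if x < ?N then 1 else -1) * ket (2 * ?N - 1 - x mod ?N) z"
  proof (cases "x < ?N")
    case True
    then show ?thesis using assms by (auto simp: ket_def)
  next
    case False
    then have "x mod ?N = x - ?N" using assms(1) upper_half_div_mod[of n x] by simp
    then show ?thesis using False assms by (auto simp: ket_def; linarith)
  qed
  then show ?thesis
    using apply_extension_gates[OF assms(2)] by simp
qed

definition cs_angle :: "nat \<Rightarrow> nat \<Rightarrow> nat \<Rightarrow> real" where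
  "cs_angle N l j = real j * (real l + 1 / 2) * pi / real N"

definition cos_kernel :: "nat \<Rightarrow> nat \<Rightarrow> nat \<Rightarrow> complex" where
  "cos_kernel N l j = complex_of_real (cos (cs_angle N l j) / sqrt N)"

definition sin_kernel :: "nat \<Rightarrow> nat \<Rightarrow> nat \<Rightarrow> complex" where
  "sin_kernel N l j = - \<i> * complex_of_real (sin (cs_angle N l j) / sqrt N)"

definition dft_gates :: "nat \<Rightarrow> complex mat list" where
  "dft_gates n = phase_layer (Suc n) (- pi / 2^Suc n) (Suc n) @ qft_gates (Suc n) (-1) (Suc n)"

lemma apply_dft_gates:
  "j < 2^Suc n \<Longrightarrow> apply_circuit (Suc n) (dft_gates n) w j =
    cis (- pi / 2^Suc n * real j) * (\<Sum>z<2^Suc n. fourier_coeff (-1) (Suc n) j z * w z)"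
  by (simp add: dft_gates_def apply_circuit_append apply_phase_layer apply_qft_gates fourier_low_def
      del: qft_gates.simps phase_layer.simps)

lemma sum_two_kets:
  assumes "p < M" "q < M"
  shows "(\<Sum>z<M. f z * (c * (ket p z + s * ket q z))) = c * (f p + s * f q)"
proof -
  have "f z * (c * (ket p z + s * ket q z)) =
      (if z = p then c * f z else 0) + (if z = q then c * s * f z else 0)" for z
    by (simp add: ket_def algebra_simps)
  then have "(\<Sum>z<M. f z * (c * (ket p z + s * ket q z))) =
      (\<Sum>z<M. if z = p then c * f z else 0) + (\<Sum>z<M. if z = q then c * s * f z else 0)"
    by (simp add: sum.distrib)
  also have "\<dots> = c * (f p + s * f q)"
    using assms by (simp add: algebra_simps)
  finally show ?thesis .
qed

lemma inv_sqrt2_div_sqrt_power: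
  "inv_sqrt2 / complex_of_real (sqrt (2^Suc n)) = 1 / (2 * complex_of_real (sqrt (real ((2::nat)^n))))"
proof -
  have "sqrt 2 * sqrt (2^Suc n) = sqrt 2 * sqrt 2 * sqrt (real ((2::nat)^n))"
    by (simp add: real_sqrt_mult)
  then have "sqrt 2 * sqrt (2^Suc n) = 2 * sqrt (real ((2::nat)^n))"
    by simp
  then have "complex_of_real (sqrt 2) * complex_of_real (sqrt (2^Suc n)) =
      2 * complex_of_real (sqrt (real ((2::nat)^n)))"
    by (metis of_real_mult of_real_numeral)
  then show ?thesis
    by (simp add: inv_sqrt2_def field_simps)
qed

lemma dft_of_extension:
  fixes n l j :: nat and s :: complex
  defines "N \<equiv> (2::nat)^n"
  assumes "l < N"
  shows "cis (- pi / 2^Suc n * real j) *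
      (inv_sqrt2 * (fourier_coeff (-1) (Suc n) j l + s * fourier_coeff (-1) (Suc n) j (2 * N - 1 - l))) =
    (cis (- cs_angle N l j) + s * cis (cs_angle N l j)) / (2 * complex_of_real (sqrt N))"
proof -
  have N: "real N = 2^n" by (simp add: N_def)
  have first: "cis (- pi / 2^Suc n * real j) * cis (-1 * 2 * pi * real j * real l / 2^Suc n) =
      cis (- cs_angle N l j)"
    unfolding cis_mult by (rule arg_cong[where f = cis]) (simp add: cs_angle_def N field_simps)
  have second: "cis (- pi / 2^Suc n * real j) * cis (-1 * 2 * pi * real j * real (2 * N - 1 - l) / 2^Suc n) =
      cis (cs_angle N l j)"
  proof -
    have "- pi / 2^Suc n * real j + -1 * 2 * pi * real j * real (2 * N - 1 - l) / 2^Suc n =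
        cs_angle N l j + 2 * pi * (- real j)"
      using assms(2) by (simp add: cs_angle_def N of_nat_diff field_simps)
    moreover have "cis (2 * pi * (- real j)) = 1" by (rule cis_multiple_2pi) simp
    ultimately show ?thesis
      unfolding cis_mult by (metis cis_mult mult_1_right)
  qed
  have scale: "inv_sqrt2 / complex_of_real (sqrt (2^Suc n)) = 1 / (2 * complex_of_real (sqrt N))"
    unfolding N_def by (rule inv_sqrt2_div_sqrt_power)
  have "cis (- pi / 2^Suc n * real j) *
      (inv_sqrt2 * (fourier_coeff (-1) (Suc n) j l + s * fourier_coeff (-1) (Suc n) j (2 * N - 1 - l))) =
    (inv_sqrt2 / complex_of_real (sqrt (2^Suc n))) *
      (cis (- pi / 2^Suc n * real j) * cis (-1 * 2 * pi * real j * real l / 2^Suc n) +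
       s * (cis (- pi / 2^Suc n * real j) * cis (-1 * 2 * pi * real j * real (2 * N - 1 - l) / 2^Suc n)))"
    unfolding fourier_coeff_def by (simp add: field_simps)
  then show ?thesis
    unfolding first second scale by simp
qed

lemma cis_minus_plus_cis: "cis (- p) + cis p = complex_of_real (2 * cos p)"
  and cis_minus_minus_cis: "cis (- p) - cis p = - \<i> * complex_of_real (2 * sin p)"
  by (simp_all add: complex_eq_iff)

definition spectrum_gates :: "nat \<Rightarrow> complex mat list" where
  "spectrum_gates n = dft_gates n @ extension_gates n"

lemma apply_spectrum_gates:
  fixes n :: nat
  defines "N \<equiv> (2::nat)^n"
  assumes "x < 2 * N" "j < 2 * N"
  shows "apply_circuit (Suc n) (spectrum_gates n) (ket x) j =
    (if x < N then cos_kernel N x j else sin_kernel N (x - N) j)"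
proof -
  define l where "l = x mod N"
  define s :: complex where "s = (if x < N then 1 else -1)"
  have l: "l < N" "2 * N - 1 - l < 2 * N" by (auto simp: l_def N_def)
  have "apply_circuit (Suc n) (spectrum_gates n) (ket x) j =
      cis (- pi / 2^Suc n * real j) * (\<Sum>z<2 * N. fourier_coeff (-1) (Suc n) j z *
        (inv_sqrt2 * (ket l z + s * ket (2 * N - 1 - l) z)))"
    using assms apply_extension_gates_ket[of x n]
    by (simp add: spectrum_gates_def apply_circuit_append apply_dft_gates l_def s_def N_def)
  also have "\<dots> = (cis (- cs_angle N l j) + s * cis (cs_angle N l j)) / (2 * complex_of_real (sqrt N))"
    using l dft_of_extension[of l n j s] by (simp add: sum_two_kets N_def)
  also have "\<dots> = (if x < N then cos_kernel N x j else sin_kernel N (x - N) j)"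
  proof (cases "x < N")
    case True
    then show ?thesis
      using cis_minus_plus_cis[of "cs_angle N l j"] by (simp add: s_def l_def cos_kernel_def field_simps)
  next
    case False
    then have "l = x - N" using assms(2) by (simp add: l_def le_mod_geq)
    have "(cis (- cs_angle N l j) + s * cis (cs_angle N l j)) / (2 * complex_of_real (sqrt N)) =
        (cis (- cs_angle N l j) - cis (cs_angle N l j)) / (2 * complex_of_real (sqrt N))"
      using False by (simp add: s_def)
    also have "\<dots> = - \<i> * complex_of_real (2 * sin (cs_angle N l j)) / (2 * complex_of_real (sqrt N))"
      by (simp only: cis_minus_minus_cis)
    also have "\<dots> = sin_kernel N (x - N) j"
      using \<open>l = x - N\<close> by (simp add: sin_kernel_def)
    finally show ?thesis using False by simp
  qed
  finally show ?thesis .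
qed

definition flip_top_if_nonzero :: "nat \<Rightarrow> nat \<Rightarrow> nat" where
  "flip_top_if_nonzero n y = (if y mod 2^n = 0 then y else if y < 2^n then y + 2^n else y - 2^n)"

definition flip_gates :: "nat \<Rightarrow> complex mat list" where
  "flip_gates n = neg_gates (Suc n) (Suc n) @ neg_gates (Suc n) n"

lemma neg_low_neg_low:
  assumes "y < 2 * 2^n"
  shows "neg_low n (neg_low (Suc n) y) = flip_top_if_nonzero n y"
proof -
  let ?N = "(2::nat)^n"
  have outer: "neg_low (Suc n) y = (2 * ?N - y) mod (2 * ?N)"
    using assms by (simp add: neg_low_def)
  consider "y = 0" | "0 < y" "y < ?N" | "y = ?N" | "?N < y" by linarith
  then show ?thesis
  proof cases
    case 1
    then show ?thesis by (simp add: outer neg_low_def flip_top_if_nonzero_def)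
  next
    case 2
    define z where "z = neg_low (Suc n) y"
    have "z = 1 * ?N + (?N - y)" using 2 by (simp add: z_def outer)
    then have "z div ?N = 1" "z mod ?N = ?N - y"
      using 2 by (simp_all only: div_mult_self3 mod_mult_self3 div_less mod_less diff_less)
    then have "neg_low n z = y + ?N" using 2 by (simp add: neg_low_def)
    then show ?thesis using 2 by (simp add: z_def flip_top_if_nonzero_def)
  next
    case 3
    then show ?thesis by (simp add: outer neg_low_def flip_top_if_nonzero_def)
  next
    case 4
    then have "neg_low (Suc n) y = 2 * ?N - y" using assms by (simp add: outer)
    moreover have "y mod ?N = y - ?N" using 4 assms upper_half_div_mod[of n y] by simp
    ultimately show ?thesis using 4 assms by (simp add: neg_low_def flip_top_if_nonzero_def)
  qed
qed

lemma apply_flip_gates: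
  "y < 2 * 2^n \<Longrightarrow> apply_circuit (Suc n) (flip_gates n) v y = v (flip_top_if_nonzero n y)"
proof -
  assume y: "y < 2 * 2^n"
  have "neg_low (Suc n) y < 2^Suc n" using y by (simp add: neg_low_def)
  then show ?thesis
    using y by (simp add: flip_gates_def apply_circuit_append apply_neg_gates neg_low_neg_low)
qed

lemma apply_top_rotation:
  assumes "y < 2 * 2^n"
  shows "apply_gate (Suc n) (single_gate (Suc n) (Suc n) (rotation \<theta>)) v y =
    (if 2^n \<le> y then of_real (sin \<theta>) * v (y - 2^n) + of_real (cos \<theta>) * v y
     else of_real (cos \<theta>) * v y - of_real (sin \<theta>) * v (y + 2^n))"
  using apply_rotation[of "Suc n" "Suc n" y] assms qbit_top[OF assms]
    unset_bit_top[OF assms] set_bit_top[OF assms]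
  by simp

lemma of_real_cos_sin_double:
  "complex_of_real (cos \<theta>) * of_real (cos \<theta>) + of_real (sin \<theta>) * of_real (sin \<theta>) = 1"
  "complex_of_real (cos \<theta>) * of_real (cos \<theta>) - of_real (sin \<theta>) * of_real (sin \<theta>) = of_real (cos (2 * \<theta>))"
  "2 * complex_of_real (sin \<theta>) * of_real (cos \<theta>) = of_real (sin (2 * \<theta>))"
  by (simp_all add: cos_double sin_double power2_eq_square flip: of_real_mult of_real_add of_real_diff)
    (metis of_real_mult of_real_numeral)

text \<open>Where flip_gates acts as X on the top qubit, X R(-\<theta>) X = R(\<theta>) and the pair y, y + 2^n is
  rotated by R(2\<theta>); where it acts trivially, R(\<theta>) R(-\<theta>) = I.\<close>

definition butterfly_gates :: "nat \<Rightarrow> real \<Rightarrow> complex mat list" where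
  "butterfly_gates n \<theta> = single_gate (Suc n) (Suc n) (rotation \<theta>) # flip_gates n @
     single_gate (Suc n) (Suc n) (rotation (- \<theta>)) # flip_gates n"

lemma apply_butterfly_gates:
  assumes y: "y < 2 * 2^n"
  shows "apply_circuit (Suc n) (butterfly_gates n \<theta>) v y =
    (if y mod 2^n = 0 then v y
     else if y < 2^n then of_real (cos (2 * \<theta>)) * v y - of_real (sin (2 * \<theta>)) * v (y + 2^n)
     else of_real (sin (2 * \<theta>)) * v (y - 2^n) + of_real (cos (2 * \<theta>)) * v y)"
proof -
  let ?N = "(2::nat)^n" and ?m = "Suc n"
  define c where "c = complex_of_real (cos \<theta>)"
  define s where "s = complex_of_real (sin \<theta>)"
  note trig = of_real_cos_sin_double[of \<theta>, folded c_def s_def]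
  define a where "a = apply_circuit ?m (flip_gates n) v"
  define b where "b = apply_gate ?m (single_gate ?m ?m (rotation (- \<theta>))) a"
  have a: "a z = v (flip_top_if_nonzero n z)" if "z < 2 * ?N" for z
    using apply_flip_gates[OF that] by (simp add: a_def)
  have b: "b z = (if ?N \<le> z then - s * a (z - ?N) + c * a z else c * a z + s * a (z + ?N))"
    if "z < 2 * ?N" for z
    using apply_top_rotation[OF that] by (simp add: b_def c_def s_def)
  have out: "apply_circuit ?m (butterfly_gates n \<theta>) v y =
      (if ?N \<le> y then s * b (flip_top_if_nonzero n (y - ?N)) + c * b (flip_top_if_nonzero n y)
       else c * b (flip_top_if_nonzero n y) - s * b (flip_top_if_nonzero n (y + ?N)))"
    using apply_top_rotation[OF y] y apply_flip_gates[of _ n b]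
    by (simp add: butterfly_gates_def apply_circuit_append a_def b_def c_def s_def)
  consider "y = 0" | "0 < y" "y < ?N" | "y = ?N" | "?N < y" by linarith
  then show ?thesis
  proof cases
    case 1
    then have "apply_circuit ?m (butterfly_gates n \<theta>) v y = (c * c + s * s) * v 0"
      using out a b by (simp add: flip_top_if_nonzero_def algebra_simps)
    then show ?thesis using 1 trig by simp
  next
    case 2
    then have "apply_circuit ?m (butterfly_gates n \<theta>) v y = (c * c - s * s) * v y - (2 * s * c) * v (y + ?N)"
      using out a b by (simp add: flip_top_if_nonzero_def algebra_simps)
    then show ?thesis using 2 trig by simp
  next
    case 3
    then have "apply_circuit ?m (butterfly_gates n \<theta>) v y = (c * c + s * s) * v ?N"
      using out a b by (simp add: flip_top_if_nonzero_def algebra_simps)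
    then show ?thesis using 3 trig by simp
  next
    case 4
    have low: "y mod ?N = y - ?N" "y mod ?N \<noteq> 0" using 4 y upper_half_div_mod[of n y] by auto
    then have "flip_top_if_nonzero n y = y - ?N" "flip_top_if_nonzero n (y - ?N) = y"
      using 4 y by (auto simp: flip_top_if_nonzero_def)
    moreover have "y - ?N < 2 * ?N" "\<not> ?N \<le> y - ?N" using y by auto
    ultimately have "apply_circuit ?m (butterfly_gates n \<theta>) v y =
        (2 * s * c) * v (y - ?N) + (c * c - s * s) * v y"
      using 4 y out a[of y] a[of "y - ?N"] b[of y] b[of "y - ?N"] by (simp add: algebra_simps)
    then show ?thesis using 4 low trig by simp
  qed
qed

lemma neg_low_top: "2^n \<le> z \<Longrightarrow> z < 2 * 2^n \<Longrightarrow> neg_low n z = (if z = 2^n then 2^n else 3 * 2^n - z)"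
  using upper_half_div_mod[of n z] by (auto simp: neg_low_def)

text \<open>Row y of the target matrix combines the spectral values at j and 2N - j, where j = y for
  the cosine rows y < N and j = y + 1 - N for the sine rows.\<close>

definition fold_spectrum :: "nat \<Rightarrow> (nat \<Rightarrow> complex) \<Rightarrow> nat \<Rightarrow> complex" where
  "fold_spectrum N g y =
    (if y = 0 then g 0
     else if y < N then inv_sqrt2 * (g y - g (2 * N - y))
     else if y < 2 * N - 1 then inv_sqrt2 * (g (y + 1 - N) + g (2 * N - (y + 1 - N)))
     else g N)"

lemma of_real_cos_sin_pi_quarter:
  "complex_of_real (cos (pi / 4)) = inv_sqrt2" "complex_of_real (sin (pi / 4)) = inv_sqrt2"
proof -
  have "sqrt 2 / 2 = 1 / sqrt (2::real)" by (simp add: field_simps)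
  then have "cos (pi / 4) = 1 / sqrt 2" "sin (pi / 4) = 1 / sqrt 2"
    using cos_45 sin_45 by simp_all
  then show "complex_of_real (cos (pi / 4)) = inv_sqrt2" "complex_of_real (sin (pi / 4)) = inv_sqrt2"
    by (simp_all add: inv_sqrt2_def)
qed

definition fold_gates :: "nat \<Rightarrow> complex mat list" where
  "fold_gates n =
    cshift_gates (Suc n) (Suc n) n 1 @ butterfly_gates n (pi / 8) @ cneg_gates (Suc n) (Suc n) n"

lemma apply_fold_gates:
  assumes y: "y < 2 * 2^n"
  shows "apply_circuit (Suc n) (fold_gates n) g y = fold_spectrum (2^n) g y"
proof -
  let ?N = "(2::nat)^n" and ?m = "Suc n"
  define h where "h = apply_circuit ?m (cneg_gates ?m ?m n) g"
  define u where "u = apply_circuit ?m (butterfly_gates n (pi / 8)) h"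
  have h: "h z = g (if z < ?N then z else if z = ?N then ?N else 3 * ?N - z)" if "z < 2 * ?N" for z
    using apply_cneg_gates[of n ?m ?m z g] that qbit_top[OF that] neg_low_top[of n z] by (simp add: h_def)
  have u: "u z = (if z mod ?N = 0 then h z else if z < ?N then inv_sqrt2 * (h z - h (z + ?N))
      else inv_sqrt2 * (h (z - ?N) + h z))" if "z < 2 * ?N" for z
    using apply_butterfly_gates[OF that, of "pi / 8" h] of_real_cos_sin_pi_quarter
    by (simp add: u_def algebra_simps)
  have shift: "apply_circuit ?m (fold_gates n) g y = u (if y < ?N then y else ?N + (y - ?N + 1) mod ?N)"
    using apply_cshift_gates[of n ?m ?m y 1 u] y qbit_top[OF y] upper_half_div_mod[of n y]
    by (auto simp: fold_gates_def apply_circuit_append u_def h_def add_low_def)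
  consider "y = 0" | "0 < y" "y < ?N" | "?N \<le> y" "y < 2 * ?N - 1" | "y = 2 * ?N - 1" using y by linarith
  then show ?thesis
  proof cases
    case 1
    then show ?thesis using shift u h by (simp add: fold_spectrum_def)
  next
    case 2
    then show ?thesis using shift u h by (simp add: fold_spectrum_def)
  next
    case 3
    then have "(y - ?N + 1) mod ?N = y + 1 - ?N" by simp
    moreover have "(y + 1) mod ?N = y + 1 - ?N" using 3 upper_half_div_mod[of n "y + 1"] by simp
    moreover have "y + 1 - ?N < ?N" "2 * ?N - (y + 1 - ?N) = 3 * ?N - (y + 1)" using 3 by linarith+
    ultimately show ?thesis using 3 shift u h by (simp add: fold_spectrum_def)
  next
    case 4
    then have "(if y < ?N then y else ?N + (y - ?N + 1) mod ?N) = ?N" by auto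
    moreover have "(1::nat) \<le> ?N" by simp
    then have "\<not> 2 * ?N - 1 < ?N" "\<not> 2 * ?N \<le> Suc 0" by linarith+
    ultimately show ?thesis using 4 shift u[of ?N] h[of ?N] by (simp add: fold_spectrum_def)
  qed
qed

lemma cs_angle_reflect:
  assumes "N > 0" "j \<le> 2 * N"
  shows "cos (cs_angle N l (2 * N - j)) = - cos (cs_angle N l j)"
    and "sin (cs_angle N l (2 * N - j)) = sin (cs_angle N l j)"
proof -
  have angle: "cs_angle N l (2 * N - j) = real (2 * l + 1) * pi - cs_angle N l j"
    using assms by (simp add: cs_angle_def of_nat_diff field_simps)
  have "cos (real (2 * l + 1) * pi) = -1" using cos_npi[of "2 * l + 1"] by simp
  moreover have "sin (real (2 * l + 1) * pi) = 0" by (rule sin_npi)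
  ultimately show "cos (cs_angle N l (2 * N - j)) = - cos (cs_angle N l j)"
    and "sin (cs_angle N l (2 * N - j)) = sin (cs_angle N l j)"
    unfolding angle cos_diff sin_diff by simp_all
qed

lemma cos_cs_angle_self: "N > 0 \<Longrightarrow> cos (cs_angle N l N) = 0"
proof -
  assume "N > 0"
  then have "cs_angle N l N = real l * pi + pi / 2" by (simp add: cs_angle_def field_simps)
  then show ?thesis by (simp add: cos_add)
qed

lemma inv_sqrt2_scale:
  assumes "N > 0"
  shows "inv_sqrt2 * (2 * complex_of_real (a / sqrt N)) = complex_of_real (sqrt (2 / real N) * a)"
proof -
  have two: "2 / sqrt 2 = sqrt (2::real)" by (simp add: field_simps)
  have "1 / sqrt 2 * (2 * (a / sqrt N)) = (2 / sqrt 2) * a / sqrt N" by simp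
  also have "\<dots> = sqrt (2 / real N) * a" unfolding two by (simp add: real_sqrt_divide)
  finally have "1 / sqrt 2 * (2 * (a / sqrt N)) = sqrt (2 / real N) * a" .
  from arg_cong[OF this, of complex_of_real] show ?thesis
    by (simp add: inv_sqrt2_def)
qed

lemma fold_spectrum_cos_kernel:
  assumes "l < N" "y < 2 * N"
  shows "fold_spectrum N (cos_kernel N l) y = (if y < N then DCT2 N $$ (y, l) else 0)"
proof -
  have N: "N > 0" using assms by simp
  have reflect: "cos_kernel N l (2 * N - j) = - cos_kernel N l j" if "j \<le> 2 * N" for j
    using cs_angle_reflect(1)[OF N that] by (simp add: cos_kernel_def)
  have DCT: "DCT2 N $$ (y, l) =
      complex_of_real (sqrt (2 / real N) * (if y = 0 then 1 / sqrt 2 else 1) * cos (cs_angle N l y))"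
    if "y < N" using that assms by (simp add: DCT2_def cs_angle_def)
  consider "y = 0" | "0 < y" "y < N" | "N \<le> y" "y < 2 * N - 1" | "y = 2 * N - 1" using assms by linarith
  then show ?thesis
  proof cases
    case 1
    then show ?thesis
      using N DCT by (simp add: fold_spectrum_def cos_kernel_def cs_angle_def real_sqrt_divide)
  next
    case 2
    then have "fold_spectrum N (cos_kernel N l) y = inv_sqrt2 * (2 * cos_kernel N l y)"
      using reflect[of y] by (simp add: fold_spectrum_def)
    also have "\<dots> = complex_of_real (sqrt (2 / real N) * cos (cs_angle N l y))"
      unfolding cos_kernel_def by (rule inv_sqrt2_scale[OF N])
    finally show ?thesis using 2 DCT by simp
  next
    case 3
    then show ?thesis using reflect[of "y + 1 - N"] by (simp add: fold_spectrum_def)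
  next
    case 4
    then have "y \<noteq> 0" "\<not> y < N" "\<not> y < 2 * N - 1" using N by linarith+
    then show ?thesis using N by (simp add: fold_spectrum_def cos_kernel_def cos_cs_angle_self)
  qed
qed

lemma fold_spectrum_sin_kernel:
  assumes "l < N" "y < 2 * N"
  shows "fold_spectrum N (sin_kernel N l) y = (if y < N then 0 else - \<i> * DST2 N $$ (y - N, l))"
proof -
  have N: "N > 0" using assms by simp
  have reflect: "sin_kernel N l (2 * N - j) = sin_kernel N l j" if "j \<le> 2 * N" for j
    using cs_angle_reflect(2)[OF N that] by (simp add: sin_kernel_def)
  have DST: "DST2 N $$ (r, l) = complex_of_real (sqrt (2 / real N) *
      (if r + 1 = N then 1 / sqrt 2 else 1) * sin (cs_angle N l (r + 1)))" if "r < N" for r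
    using that assms by (simp add: DST2_def cs_angle_def)
  consider "y = 0" | "0 < y" "y < N" | "N \<le> y" "y < 2 * N - 1" | "y = 2 * N - 1" using assms by linarith
  then show ?thesis
  proof cases
    case 1
    then show ?thesis using N by (simp add: fold_spectrum_def sin_kernel_def cs_angle_def)
  next
    case 2
    then show ?thesis using reflect[of y] by (simp add: fold_spectrum_def)
  next
    case 3
    define j where "j = y + 1 - N"
    have j: "y - N + 1 = j" "j \<noteq> N" "y - N < N" using 3 by (auto simp: j_def)
    have "fold_spectrum N (sin_kernel N l) y = inv_sqrt2 * (2 * sin_kernel N l j)"
      using 3 reflect[of j] by (simp add: fold_spectrum_def j_def)
    also have "\<dots> = - \<i> * (inv_sqrt2 * (2 * complex_of_real (sin (cs_angle N l j) / sqrt N)))"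
      by (simp add: sin_kernel_def algebra_simps)
    also have "\<dots> = - \<i> * complex_of_real (sqrt (2 / real N) * sin (cs_angle N l j))"
      unfolding inv_sqrt2_scale[OF N] ..
    finally show ?thesis using 3 j DST[of "y - N"] by simp
  next
    case 4
    then have "y - N + 1 = N" "y - N < N" "y \<noteq> 0" "\<not> y < N" "\<not> y < 2 * N - 1" using N by auto
    then show ?thesis
      using 4 N DST[of "y - N"] by (simp add: fold_spectrum_def sin_kernel_def real_sqrt_divide)
  qed
qed

lemma CS_block_index:
  assumes "x < 2 * N" "y < 2 * N"
  shows "CS_block N $$ (y, x) = (if x < N then (if y < N then DCT2 N $$ (y, x) else 0)
    else (if y < N then 0 else - \<i> * DST2 N $$ (y - N, x - N)))"
  using assms by (simp add: CS_block_def DCT2_def DST2_def)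

lemma fold_spectrum_cong:
  assumes "\<And>j. j < 2 * N \<Longrightarrow> g j = g' j" "y < 2 * N"
  shows "fold_spectrum N g y = fold_spectrum N g' y"
  using assms by (simp add: fold_spectrum_def)

definition cs_block_gates :: "nat \<Rightarrow> complex mat list" where
  "cs_block_gates n = fold_gates n @ spectrum_gates n"

lemma apply_cs_block_gates:
  assumes "x < 2 * 2^n" "y < 2 * 2^n"
  shows "apply_circuit (Suc n) (cs_block_gates n) (ket x) y = CS_block (2^n) $$ (y, x)"
proof -
  let ?N = "(2::nat)^n"
  have "apply_circuit (Suc n) (cs_block_gates n) (ket x) y =
      fold_spectrum ?N (apply_circuit (Suc n) (spectrum_gates n) (ket x)) y"
    using assms by (simp add: cs_block_gates_def apply_circuit_append apply_fold_gates)
  also have "\<dots> = fold_spectrum ?N (if x < ?N then cos_kernel ?N x else sin_kernel ?N (x - ?N)) y"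
    using assms by (intro fold_spectrum_cong) (simp_all add: apply_spectrum_gates)
  also have "\<dots> = CS_block ?N $$ (y, x)"
    using assms by (simp add: CS_block_index fold_spectrum_cos_kernel fold_spectrum_sin_kernel)
  finally show ?thesis .
qed

lemma elementary_cs_block_gates: "elementary_circuit (Suc n) (cs_block_gates n)"
proof -
  have "elementary_gate (Suc n) (single_gate (Suc n) (Suc n) U)" if "unitary2 U" for U
    using that by (simp add: elementary_single_gate)
  then show ?thesis
    by (simp add: cs_block_gates_def fold_gates_def spectrum_gates_def butterfly_gates_def
        flip_gates_def dft_gates_def extension_gates_def unitary2_rotation unitary2_hadamard
        elementary_cshift_gates elementary_cneg_gates
        elementary_neg_gates elementary_phase_layer elementary_qft_gates elementary_cnot_layer
        del: qft_gates.simps phase_layer.simps cnot_layer.simps)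
qed

lemma length_cs_block_gates: "length (cs_block_gates n) \<le> 80 * (n + 1)^2"
proof -
  define M where "M = (n + 1)^2"
  define N where "N = n^2"
  have squares: "N \<le> M" "n + 1 \<le> M"
    by (simp_all add: M_def N_def power2_eq_square)
  have parts: "length (cshift_gates (Suc n) (Suc n) n 1) \<le> 13 * N"
    "length (cneg_gates (Suc n) (Suc n) n) \<le> 14 * N"
    "length (neg_gates (Suc n) (Suc n)) \<le> 10 * M"
    "length (neg_gates (Suc n) n) \<le> 10 * N"
    "length (qft_gates (Suc n) (-1) (Suc n)) \<le> 4 * M"
    unfolding M_def N_def Suc_eq_plus1[symmetric]
    by (rule length_cshift_gates length_cneg_gates length_neg_gates length_qft_gates)+
  have "length (cs_block_gates n) = length (cshift_gates (Suc n) (Suc n) n 1) +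
      2 * length (neg_gates (Suc n) (Suc n)) + 2 * length (neg_gates (Suc n) n) + 2 +
      length (cneg_gates (Suc n) (Suc n) n) + (n + 1) + length (qft_gates (Suc n) (-1) (Suc n)) + n + 1"
    by (simp add: cs_block_gates_def fold_gates_def spectrum_gates_def butterfly_gates_def flip_gates_def
        dft_gates_def extension_gates_def del: qft_gates.simps phase_layer.simps)
  then have "length (cs_block_gates n) \<le> 80 * M"
    using parts squares by linarith
  then show ?thesis by (simp add: M_def)
qed

lemma realizes_cs_block_gates: "realizes (n + 1) 0 (cs_block_gates n) (CS_block (2^n))"
  unfolding realizes_def
proof (intro conjI allI impI)
  show "\<forall>G\<in>set (cs_block_gates n). elementary_gate (n + 1 + 0) G"
    using elementary_cs_block_gates[of n] by (simp add: elementary_circuit_def)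
  fix x y :: nat
  assume "x < 2^(n + 1)" "y < 2^(n + 1 + 0)"
  then have "x < 2^Suc n" "y < 2^Suc n" by simp_all
  moreover have "\<forall>G\<in>set (cs_block_gates n). G \<in> carrier_mat (2^Suc n) (2^Suc n)"
    using elementary_cs_block_gates[of n] unfolding elementary_circuit_def
    by (blast intro: elementary_gate_carrier)
  ultimately show "circuit_mat (n + 1 + 0) (cs_block_gates n) $$ (y, x * 2^0) =
      (if y mod 2^0 = 0 then CS_block (2^n) $$ (y div 2^0, x) else 0)"
    using circuit_mat_entry apply_cs_block_gates by simp
qed

theorem mainTheorem3:
  shows "\<exists>c::real. c > 0 \<and> (\<exists>K::nat. \<forall>n::nat. n \<ge> 1 \<longrightarrow>
           (\<exists>k \<le> K. \<exists>gs. real (length gs) \<le> c * real n ^ 2 \<and>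
              realizes (n + 1) k gs (CS_block (2 ^ n))))"
proof -
  have "real (length (cs_block_gates n)) \<le> 320 * real n ^ 2" if "n \<ge> 1" for n
  proof -
    have "n \<le> n^2" "1 \<le> n^2" using that by (simp_all add: power2_eq_square)
    moreover have "(n + 1)^2 = n^2 + 2 * n + 1" by (simp add: power2_eq_square)
    ultimately have "length (cs_block_gates n) \<le> 320 * n^2"
      using length_cs_block_gates[of n] by linarith
    then show ?thesis by (metis of_nat_le_iff of_nat_mult of_nat_numeral of_nat_power)
  qed
  then show ?thesis
    using realizes_cs_block_gates by (intro exI[of _ 320] conjI exI[of _ 0]) auto
qed

end
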